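(* Let $A$ be an even Moore algebra over $R$ with characteristic series $u(t)=\sum_{i\ge1}u_it^i$, and assume $u_1$ is not a zero divisor in $R$. Then there is an isomorphism of $R$-modules $H^*(A,A)\cong R[[t]]/(u'(t))$, where $u'(t)=\sum_{i\ge1}iu_it^{i-1}$ is the formal derivative of $u(t)$.
   Context: $R$ is an evenly graded commutative ring. An even Moore algebra of (even) degree $d$ over $R$ is a unital $A_\infty$-algebra (a degree $-1$ coderivation $m$ of the tensor coalgebra $T\Sigma A$ with $m^2=0$, $m_0=0$, $m_1$ the suspended differential, strict unit $1$ of degree $0$ with $m_2[1|a]=[a]=(-1)^{|a|}m_2[a|1]$ and $m_i$, $i\ne2$, vanishing when an argument is $1$) whose underlying complex is free on $1$ (degree $0$) and $y$ (degree $d+1$); its characteristic series is $u(t)=\sum_{i\ge1}u_it^i$ with $m_i[y|\dots|y]=u_i[1]$, where $t$ is a formal variable of degree $-(d+2)$. $H^*(A,A)$ is the cohomology of the Hochschild complex $\mathrm{Coder}(T\Sigma A)$ with differential $f\mapsto[f,m]$ (graded commutator). *)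

theory Defs
  imports "HOL-Computational_Algebra.Formal_Power_Series"
begin

definition evenly_graded_ring :: "(int \<Rightarrow> 'r::comm_ring_1 set) \<Rightarrow> bool" where
  "evenly_graded_ring Rg \<longleftrightarrow>
     (\<forall>k. 0 \<in> Rg k \<and> (\<forall>a\<in>Rg k. \<forall>b\<in>Rg k. a + b \<in> Rg k \<and> - a \<in> Rg k)) \<and>
     (\<forall>j k. \<forall>a\<in>Rg j. \<forall>b\<in>Rg k. a * b \<in> Rg (j + k)) \<and>
     1 \<in> Rg 0 \<and>
     (\<forall>x. \<exists>!c :: int \<Rightarrow> 'r. finite {k. c k \<noteq> 0} \<and> (\<forall>k. c k \<in> Rg k) \<and>
            x = (\<Sum>k\<in>{k. c k \<noteq> 0}. c k)) \<and>
     (\<forall>k. odd k \<longrightarrow> Rg k = {0})"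

text \<open>Basis letters of \<Sigma>A: s1 (degree 1) and sy (degree d+2), where |y| = d+1.
  Basis of T\<Sigma>A: words (lists of letters), including the empty word (T^0 = R).\<close>

datatype letter = One | Y

fun ldeg :: "int \<Rightarrow> letter \<Rightarrow> int" where
  "ldeg d One = 1"
| "ldeg d Y = d + 2"

definition wdeg :: "int \<Rightarrow> letter list \<Rightarrow> int" where
  "wdeg d w = sum_list (map (ldeg d) w)"

definition ksign :: "int \<Rightarrow> 'r::comm_ring_1" where
  "ksign n = (if even n then 1 else -1)"

text \<open>A coderivation of T\<Sigma>A is determined by its corestriction T\<Sigma>A \<rightarrow> \<Sigma>A, which
  (by freeness) is determined by the coefficient f w b of the basis letter b in the value on
  the basis word w.\<close>

type_synonym 'r cod = "letter list \<Rightarrow> letter \<Rightarrow> 'r"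

definition hom :: "(int \<Rightarrow> 'r set) \<Rightarrow> int \<Rightarrow> int \<Rightarrow> 'r cod \<Rightarrow> bool" where
  "hom Rg d k f \<longleftrightarrow> (\<forall>w b. f w b \<in> Rg (k + wdeg d w - ldeg d b))"

text \<open>Corestriction of the composite of coderivations f^ composed with g^, where g has degree kg
  (Koszul sign (-1)^(kg * degree of the letters g passes over)).\<close>

definition circ :: "int \<Rightarrow> 'r::comm_ring_1 cod \<Rightarrow> 'r cod \<Rightarrow> int \<Rightarrow> 'r cod" where
  "circ d f g kg = (\<lambda>w b. \<Sum>j\<le>length w. \<Sum>i\<le>j.
       ksign (kg * wdeg d (take i w)) *
       (g (drop i (take j w)) One * f (take i w @ [One] @ drop j w) b
      + g (drop i (take j w)) Y * f (take i w @ [Y] @ drop j w) b))"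

definition br :: "int \<Rightarrow> 'r::comm_ring_1 cod \<Rightarrow> int \<Rightarrow> 'r cod \<Rightarrow> int \<Rightarrow> 'r cod" where
  "br d f kf g kg = (\<lambda>w b. circ d f g kg w b - ksign (kf * kg) * circ d g f kf w b)"

definition even_moore_algebra ::
    "(int \<Rightarrow> 'r::comm_ring_1 set) \<Rightarrow> int \<Rightarrow> 'r cod \<Rightarrow> bool" where
  "even_moore_algebra Rg d m \<longleftrightarrow>
     even d \<and>
     hom Rg d (-1) m \<and>
     (\<forall>w b. circ d m m (-1) w b = 0) \<and>
     (\<forall>b. m [] b = 0) \<and>
     (\<forall>x b. m [One, x] b = (if b = x then 1 else 0)) \<and>
     (\<forall>x b. m [x, One] b = ksign (ldeg d x - 1) * (if b = x then 1 else 0)) \<and>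
     (\<forall>w b. length w \<noteq> 2 \<longrightarrow> One \<in> set w \<longrightarrow> m w b = 0)"

definition char_series :: "'r::comm_ring_1 cod \<Rightarrow> 'r fps" where
  "char_series m = Abs_fps (\<lambda>i. if i = 0 then 0 else m (replicate i Y) One)"

definition hdiff :: "int \<Rightarrow> 'r::comm_ring_1 cod \<Rightarrow> int \<Rightarrow> 'r cod \<Rightarrow> 'r cod" where
  "hdiff d m k f = br d f k m (-1)"

definition cocycles :: "(int \<Rightarrow> 'r::comm_ring_1 set) \<Rightarrow> int \<Rightarrow> 'r cod \<Rightarrow> int \<Rightarrow> 'r cod set" where
  "cocycles Rg d m k = {f. hom Rg d k f \<and> hdiff d m k f = (\<lambda>w b. 0)}"

definition coboundaries :: "(int \<Rightarrow> 'r::comm_ring_1 set) \<Rightarrow> int \<Rightarrow> 'r cod \<Rightarrow> int \<Rightarrow> 'r cod set" where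
  "coboundaries Rg d m k = hdiff d m (k + 1) ` {f. hom Rg d (k + 1) f}"

section \<open>Graded power series R[[t]] with |t| = -(d+2)\<close>

definition gfps :: "(int \<Rightarrow> 'r::comm_ring_1 set) \<Rightarrow> int \<Rightarrow> int \<Rightarrow> 'r fps set" where
  "gfps Rg d k = {p. \<forall>i. fps_nth p i \<in> Rg (k + int i * (d + 2))}"

definition gideal :: "(int \<Rightarrow> 'r::comm_ring_1 set) \<Rightarrow> int \<Rightarrow> 'r fps \<Rightarrow> int \<Rightarrow> int \<Rightarrow> 'r fps set" where
  "gideal Rg d q e k = {q * g | g. g \<in> gfps Rg d (k - e)}"

end

theory Submission
  imports Defs
begin

(* The Hochschild differential squares to zero because the Gerstenhaber composition circ is
   pre-Lie: its associator is the symmetric double brace. Inserting the unit 1 at position p of a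
   word gives a homotopy s_p. Correcting a cocycle successively by the coboundaries of s_0, s_1, ...
   makes it vanish on every word containing 1 without changing its class; on each word the
   corrections stabilise, so the limit exists. A normalized cochain x is determined by the two
   series a(t) = sum_n x(y^n)_1 t^n and b(t) = sum_n x(y^n)_y t^n (only one of which survives
   for parity reasons), and its differential is again normalized with components (+-u'(t) b(t), 0).
   As u_1 is not a zero divisor, neither is u'(t) in R[[t]], so the normalized cocycles of degree k
   are exactly the series a(t), and the coboundaries among them are exactly the multiples of
   u'(t). *)

lemma ksign_add: "ksign (a + b) = (ksign a * ksign b :: 'r::comm_ring_1)"
  unfolding ksign_def by auto

lemma ksign_diff: "ksign (a - b) = (ksign a * ksign b :: 'r::comm_ring_1)"
  unfolding ksign_def by auto

lemma ksign_sq[simp]: "ksign a * ksign a = (1 :: 'r::comm_ring_1)"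
  unfolding ksign_def by auto

lemma ksign_sq_left[simp]: "ksign a * (ksign a * x) = (x :: 'r::comm_ring_1)"
  by (simp add: mult.assoc[symmetric])

lemma ksign_uminus[simp]: "ksign (- a) = (ksign a :: 'r::comm_ring_1)"
  unfolding ksign_def by auto

lemma ksign_0[simp]: "ksign 0 = 1" and ksign_1[simp]: "ksign 1 = -1"
  unfolding ksign_def by auto

lemma ksign_even: "even a \<Longrightarrow> ksign a = 1" and ksign_odd: "odd a \<Longrightarrow> ksign a = -1"
  unfolding ksign_def by auto

lemma ksign_cong_even: "even (a - b) \<Longrightarrow> ksign a = ksign b"
  unfolding ksign_def by (metis diff_add_cancel even_add)

lemma ksign_Suc: "ksign (a + 1) = - ksign a"
  unfolding ksign_def by auto

lemma uminus_ksign_Suc: "- ksign (a + 1) = ksign a"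
  unfolding ksign_def by auto

lemma wdeg_Nil[simp]: "wdeg d [] = 0" unfolding wdeg_def by simp

lemma wdeg_Cons[simp]: "wdeg d (x # w) = ldeg d x + wdeg d w" unfolding wdeg_def by simp

lemma wdeg_append[simp]: "wdeg d (u @ v) = wdeg d u + wdeg d v" unfolding wdeg_def by simp

definition decomp2 :: "'a list \<Rightarrow> ('a list \<times> 'a list) set" where
  "decomp2 w = {(p, q). p @ q = w}"

definition decomp3 :: "'a list \<Rightarrow> ('a list \<times> 'a list \<times> 'a list) set" where
  "decomp3 w = {(p, q, r). p @ q @ r = w}"

definition decomp5 :: "'a list \<Rightarrow> ('a list \<times> 'a list \<times> 'a list \<times> 'a list \<times> 'a list) set" where
  "decomp5 w = {(a, b, c, d, e). a @ b @ c @ d @ e = w}"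

lemma mem_decomp2[simp]: "(p, q) \<in> decomp2 w \<longleftrightarrow> p @ q = w" unfolding decomp2_def by simp

lemma mem_decomp3[simp]: "(p, q, r) \<in> decomp3 w \<longleftrightarrow> p @ q @ r = w" unfolding decomp3_def by simp

lemma mem_decomp5[simp]: "(a, b, c, d, e) \<in> decomp5 w \<longleftrightarrow> a @ b @ c @ d @ e = w"
  unfolding decomp5_def by simp

lemma decomp2_Nil: "decomp2 [] = {([], [])}" unfolding decomp2_def by auto

lemma decomp3_Nil: "decomp3 [] = {([], [], [])}" unfolding decomp3_def by auto

lemma finite_lists_of_word: "finite {xs. set xs \<subseteq> set w \<and> length xs \<le> length w}"
  by (rule finite_lists_length_le) auto

lemma finite_decomp2[simp]: "finite (decomp2 w)"
proof -
  let ?A = "{xs. set xs \<subseteq> set w \<and> length xs \<le> length w}"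
  have "decomp2 w \<subseteq> ?A \<times> ?A" unfolding decomp2_def by auto
  then show ?thesis by (rule finite_subset) (intro finite_cartesian_product finite_lists_of_word)
qed

lemma finite_decomp3[simp]: "finite (decomp3 w)"
proof -
  let ?A = "{xs. set xs \<subseteq> set w \<and> length xs \<le> length w}"
  have "decomp3 w \<subseteq> ?A \<times> ?A \<times> ?A" unfolding decomp3_def by auto
  then show ?thesis by (rule finite_subset) (intro finite_cartesian_product finite_lists_of_word)
qed

lemma finite_decomp5[simp]: "finite (decomp5 w)"
proof -
  let ?A = "{xs. set xs \<subseteq> set w \<and> length xs \<le> length w}"
  have "decomp5 w \<subseteq> ?A \<times> ?A \<times> ?A \<times> ?A \<times> ?A" unfolding decomp5_def by auto
  then show ?thesis by (rule finite_subset) (intro finite_cartesian_product finite_lists_of_word)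
qed

lemma sum_decomp2_take_drop:
  "(\<Sum>(Q, R)\<in>decomp2 W. F Q R) = (\<Sum>i\<le>length W. F (take i W) (drop i W))"
  by (rule sum.reindex_bij_witness[where i = "\<lambda>i. (take i W, drop i W)" and j = "\<lambda>(Q, R). length Q"])
     auto

lemma bij_betw_decomp3_take_drop:
  "bij_betw (\<lambda>(j, i). (take i w, drop i (take j w), drop j w)) (SIGMA j:{..length w}. {..j}) (decomp3 w)"
proof (rule bij_betw_byWitness[where f' = "\<lambda>(p, q, r). (length p + length q, length p)"])
  show "\<forall>x\<in>SIGMA j:{..length w}. {..j}.
      (\<lambda>(p, q, r). (length p + length q, length p)) ((\<lambda>(j, i). (take i w, drop i (take j w), drop j w)) x) = x"
    by (auto simp: min_def)
  show "\<forall>y\<in>decomp3 w. (\<lambda>(j, i). (take i w, drop i (take j w), drop j w)) ((\<lambda>(p, q, r). (length p + length q, length p)) y)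
      = y"
    by auto
  show "(\<lambda>(j, i). (take i w, drop i (take j w), drop j w)) ` (SIGMA j:{..length w}. {..j}) \<subseteq> decomp3 w"
  proof clarify
    fix j i assume "j \<le> length w" "i \<le> j"
    then have "take i w @ drop i (take j w) = take j w"
      by (metis append_take_drop_id min.absorb1 take_take)
    then show "(take i w, drop i (take j w), drop j w) \<in> decomp3 w"
      by (metis append.assoc append_take_drop_id mem_decomp3)
  qed
  show "(\<lambda>(p, q, r). (length p + length q, length p)) ` decomp3 w \<subseteq> (SIGMA j:{..length w}. {..j})"
    by auto
qed

lemma sum_decomp2_Cons:
  "(\<Sum>(q, r)\<in>decomp2 (x # v). G q r) = G [] (x # v) + (\<Sum>(q, r)\<in>decomp2 v. G (x # q) r)"
proof -
  let ?f = "\<lambda>(q, r). (x # q, r)"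
  have inj: "inj_on ?f (decomp2 v)" unfolding inj_on_def by auto
  have e: "decomp2 (x # v) = insert ([], x # v) (?f ` decomp2 v)"
    by (auto simp: decomp2_def image_iff append_eq_Cons_conv)
  have "(\<Sum>(q, r)\<in>decomp2 (x # v). G q r) = G [] (x # v) + (\<Sum>(q, r)\<in>?f ` decomp2 v. G q r)"
    unfolding e by (subst sum.insert) auto
  also have "(\<Sum>(q, r)\<in>?f ` decomp2 v. G q r) = (\<Sum>(q, r)\<in>decomp2 v. G (x # q) r)"
    by (rule sum.reindex_cong[OF inj refl]) auto
  finally show ?thesis .
qed

lemma sum_decomp3_Cons:
  "(\<Sum>(p, q, r)\<in>decomp3 (x # v). G p q r)
     = (\<Sum>(q, r)\<in>decomp2 (x # v). G [] q r) + (\<Sum>(p, q, r)\<in>decomp3 v. G (x # p) q r)"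
proof -
  let ?f = "\<lambda>(q, r). ([], q, r)" and ?g = "\<lambda>(p, q, r). (x # p, q, r)"
  have inj: "inj_on ?f (decomp2 (x # v))" "inj_on ?g (decomp3 v)"
    unfolding inj_on_def by auto
  have e: "decomp3 (x # v) = ?f ` decomp2 (x # v) \<union> ?g ` decomp3 v"
    by (auto simp: decomp3_def image_iff append_eq_Cons_conv)
  have "(\<Sum>(p, q, r)\<in>decomp3 (x # v). G p q r)
      = (\<Sum>(p, q, r)\<in>?f ` decomp2 (x # v). G p q r) + (\<Sum>(p, q, r)\<in>?g ` decomp3 v. G p q r)"
    unfolding e by (rule sum.union_disjoint) auto
  also have "(\<Sum>(p, q, r)\<in>?f ` decomp2 (x # v). G p q r) = (\<Sum>(q, r)\<in>decomp2 (x # v). G [] q r)"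
    by (rule sum.reindex_cong[OF inj(1) refl]) auto
  also have "(\<Sum>(p, q, r)\<in>?g ` decomp3 v. G p q r) = (\<Sum>(p, q, r)\<in>decomp3 v. G (x # p) q r)"
    by (rule sum.reindex_cong[OF inj(2) refl]) auto
  finally show ?thesis .
qed

lemma sum_decomp2_only_Nil:
  "(\<And>q r. q \<noteq> [] \<Longrightarrow> H q r = 0) \<Longrightarrow> (\<Sum>(q, r)\<in>decomp2 v. H q r) = H [] v"
  by (cases v) (simp_all add: decomp2_Nil sum_decomp2_Cons)

lemma sum_decomp2_around_letter:
  "(\<Sum>(q, r)\<in>decomp2 (P @ c # R). F q r)
     = (\<Sum>(q, r)\<in>decomp2 P. F q (r @ c # R)) + (\<Sum>(q, r)\<in>decomp2 R. F (P @ c # q) r)"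
proof (induction P arbitrary: F)
  case Nil
  show ?case by (simp add: decomp2_Nil sum_decomp2_Cons)
next
  case (Cons x P)
  show ?case
    by (simp add: sum_decomp2_Cons Cons.IH[of "\<lambda>q. F (x # q)"] add.assoc)
qed

lemma sum_decomp3_around_letter:
  "(\<Sum>(p, q, r)\<in>decomp3 (P @ c # R). G p q r)
     = (\<Sum>(a, q, x)\<in>decomp3 P. G a q (x @ c # R)) + (\<Sum>(x, q, r)\<in>decomp3 R. G (P @ c # x) q r)
       + (\<Sum>(p1, p2)\<in>decomp2 P. \<Sum>(r1, r2)\<in>decomp2 R. G p1 (p2 @ c # r1) r2)"
proof (induction P arbitrary: G)
  case Nil
  show ?case by (simp add: decomp2_Nil decomp3_Nil sum_decomp3_Cons sum_decomp2_Cons ac_simps)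
next
  case (Cons x P)
  show ?case
    by (simp add: sum_decomp3_Cons sum_decomp2_Cons sum_decomp2_around_letter
        Cons.IH[of "\<lambda>p. G (x # p)"] ac_simps)
qed

section \<open>The pre-Lie identity and the square of the Hochschild differential\<close>

abbreviation letters :: "letter set" where "letters \<equiv> {One, Y}"

lemma circ_decomp3:
  "circ d f g kg w b
     = (\<Sum>(p, q, r)\<in>decomp3 w. ksign (kg * wdeg d p) * (\<Sum>c\<in>letters. g q c * f (p @ [c] @ r) b))"
proof -
  define T where "T = (\<lambda>(p, q, r). ksign (kg * wdeg d p) * (\<Sum>c\<in>letters. g q c * f (p @ [c] @ r) b))"
  define h where "h = (\<lambda>(j, i). (take i w, drop i (take j w), drop j w))"
  have "circ d f g kg w b = (\<Sum>j\<le>length w. \<Sum>i\<le>j. T (h (j, i)))"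
    unfolding circ_def T_def h_def by simp
  also have "\<dots> = (\<Sum>x\<in>(SIGMA j:{..length w}. {..j}). T (h x))"
    by (subst sum.Sigma) (auto simp: case_prod_beta)
  also have "\<dots> = (\<Sum>x\<in>decomp3 w. T x)"
    by (rule sum.reindex_bij_betw) (simp add: h_def bij_betw_decomp3_take_drop)
  finally show ?thesis unfolding T_def .
qed

lemma sum_decomp3_nested_left:
  "(\<Sum>(P, Q, R)\<in>decomp3 w. \<Sum>(a, q, x)\<in>decomp3 P. F a q x Q R)
     = (\<Sum>(a, q, x, Q, R)\<in>decomp5 w. F a q x Q R)"
proof -
  let ?G = "\<lambda>(P, Q, R) (a, q, x). F a q x Q R"
  have "(\<Sum>(P, Q, R)\<in>decomp3 w. \<Sum>(a, q, x)\<in>decomp3 P. F a q x Q R)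
      = (\<Sum>(y, z)\<in>(SIGMA y:decomp3 w. decomp3 (fst y)). ?G y z)"
    by (subst sum.Sigma[symmetric]) (auto simp: case_prod_beta intro!: sum.cong)
  also have "\<dots> = (\<Sum>(a, q, x, Q, R)\<in>decomp5 w. F a q x Q R)"
    by (rule sum.reindex_bij_witness[where i = "\<lambda>(a, q, x, Q, R). ((a @ q @ x, Q, R), (a, q, x))"
          and j = "\<lambda>((P, Q, R), (a, q, x)). (a, q, x, Q, R)"]) auto
  finally show ?thesis .
qed

lemma sum_decomp3_nested_right:
  "(\<Sum>(P, Q, R)\<in>decomp3 w. \<Sum>(x, q, r)\<in>decomp3 R. F P Q x q r)
     = (\<Sum>(P, Q, x, q, r)\<in>decomp5 w. F P Q x q r)"
proof -
  let ?G = "\<lambda>(P, Q, R) (x, q, r). F P Q x q r"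
  have "(\<Sum>(P, Q, R)\<in>decomp3 w. \<Sum>(x, q, r)\<in>decomp3 R. F P Q x q r)
      = (\<Sum>(y, z)\<in>(SIGMA y:decomp3 w. decomp3 (snd (snd y))). ?G y z)"
    by (subst sum.Sigma[symmetric]) (auto simp: case_prod_beta intro!: sum.cong)
  also have "\<dots> = (\<Sum>(P, Q, x, q, r)\<in>decomp5 w. F P Q x q r)"
    by (rule sum.reindex_bij_witness[where i = "\<lambda>(P, Q, x, q, r). ((P, Q, x @ q @ r), (x, q, r))"
          and j = "\<lambda>((P, Q, R), (x, q, r)). (P, Q, x, q, r)"]) auto
  finally show ?thesis .
qed

lemma sum_decomp3_nested_outer:
  "(\<Sum>(P, Q, R)\<in>decomp3 w. \<Sum>(p1, p2)\<in>decomp2 P. \<Sum>(r1, r2)\<in>decomp2 R. F p1 p2 Q r1 r2)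
     = (\<Sum>(p1, p2, Q, r1, r2)\<in>decomp5 w. F p1 p2 Q r1 r2)"
proof -
  let ?G = "\<lambda>(P, Q, R) ((p1, p2), (r1, r2)). F p1 p2 Q r1 r2"
  have "(\<Sum>(P, Q, R)\<in>decomp3 w. \<Sum>(p1, p2)\<in>decomp2 P. \<Sum>(r1, r2)\<in>decomp2 R. F p1 p2 Q r1 r2)
      = (\<Sum>(y, z)\<in>(SIGMA y:decomp3 w. decomp2 (fst y) \<times> decomp2 (snd (snd y))). ?G y z)"
    by (subst sum.Sigma[symmetric]) (auto simp: case_prod_beta sum.cartesian_product intro!: sum.cong)
  also have "\<dots> = (\<Sum>(p1, p2, Q, r1, r2)\<in>decomp5 w. F p1 p2 Q r1 r2)"
    by (rule sum.reindex_bij_witness[where i = "\<lambda>(p1, p2, Q, r1, r2). ((p1 @ p2, Q, r1 @ r2), ((p1, p2), (r1, r2)))"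
          and j = "\<lambda>((P, Q, R), ((p1, p2), (r1, r2))). (p1, p2, Q, r1, r2)"]) auto
  finally show ?thesis .
qed

lemma sum_decomp3_nested_middle:
  "(\<Sum>(p1, Q', r2)\<in>decomp3 w. \<Sum>(p2, Q, r1)\<in>decomp3 Q'. F p1 p2 Q r1 r2)
     = (\<Sum>(p1, p2, Q, r1, r2)\<in>decomp5 w. F p1 p2 Q r1 r2)"
proof -
  let ?G = "\<lambda>(p1, Q', r2) (p2, Q, r1). F p1 p2 Q r1 r2"
  have "(\<Sum>(p1, Q', r2)\<in>decomp3 w. \<Sum>(p2, Q, r1)\<in>decomp3 Q'. F p1 p2 Q r1 r2)
      = (\<Sum>(y, z)\<in>(SIGMA y:decomp3 w. decomp3 (fst (snd y))). ?G y z)"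
    by (subst sum.Sigma[symmetric]) (auto simp: case_prod_beta intro!: sum.cong)
  also have "\<dots> = (\<Sum>(p1, p2, Q, r1, r2)\<in>decomp5 w. F p1 p2 Q r1 r2)"
    by (rule sum.reindex_bij_witness[where i = "\<lambda>(p1, p2, Q, r1, r2). ((p1, p2 @ Q @ r1, r2), (p2, Q, r1))"
          and j = "\<lambda>((p1, Q', r2), (p2, Q, r1)). (p1, p2, Q, r1, r2)"]) auto
  finally show ?thesis .
qed

definition hom_mod2 :: "int \<Rightarrow> 'r::comm_ring_1 cod \<Rightarrow> int \<Rightarrow> bool" where
  "hom_mod2 d h kh \<longleftrightarrow> (\<forall>Q c. h Q c \<noteq> 0 \<longrightarrow> even (kh + wdeg d Q - ldeg d c))"

lemma hom_mod2_sign: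
  assumes "hom_mod2 d h kh"
  shows "h Q c * ksign (kg * wdeg d (P @ [c] @ x)) = h Q c * (ksign (kg * kh) * ksign (kg * wdeg d (P @ Q @ x)))"
proof (cases "h Q c = 0")
  case False
  then have "even (kh + wdeg d Q - ldeg d c)" using assms unfolding hom_mod2_def by auto
  moreover have "kg * wdeg d (P @ [c] @ x) - (kg * kh + kg * wdeg d (P @ Q @ x)) = - kg * (kh + wdeg d Q - ldeg d c)"
    by (simp add: algebra_simps)
  ultimately have "ksign (kg * wdeg d (P @ [c] @ x)) = (ksign (kg * kh + kg * wdeg d (P @ Q @ x)) :: 'a)"
    by (intro ksign_cong_even) simp
  then show ?thesis by (simp add: ksign_add)
qed simp

text \<open>The double brace f{g, h}: g and h are inserted into f at disjoint places, g before h.\<close>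

definition brace :: "int \<Rightarrow> 'r::comm_ring_1 cod \<Rightarrow> 'r cod \<Rightarrow> int \<Rightarrow> 'r cod \<Rightarrow> int \<Rightarrow> 'r cod" where
  "brace d f g kg h kh w b = (\<Sum>(a, q, x, Q, R)\<in>decomp5 w.
     ksign (kh * wdeg d (a @ q @ x)) * ksign (kg * wdeg d a) *
     (\<Sum>c\<in>letters. \<Sum>c'\<in>letters. h Q c * g q c' * f (a @ [c'] @ x @ [c] @ R) b))"

definition circ_in_prefix ::
    "int \<Rightarrow> 'r::comm_ring_1 cod \<Rightarrow> 'r cod \<Rightarrow> int \<Rightarrow> letter list \<Rightarrow> letter \<Rightarrow> letter list \<Rightarrow> letter \<Rightarrow> 'r" where
  "circ_in_prefix d f g kg P c R b = (\<Sum>(a, q, x)\<in>decomp3 P.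
     ksign (kg * wdeg d a) * (\<Sum>c'\<in>letters. g q c' * f (a @ [c'] @ x @ [c] @ R) b))"

definition circ_in_suffix ::
    "int \<Rightarrow> 'r::comm_ring_1 cod \<Rightarrow> 'r cod \<Rightarrow> int \<Rightarrow> letter list \<Rightarrow> letter \<Rightarrow> letter list \<Rightarrow> letter \<Rightarrow> 'r" where
  "circ_in_suffix d f g kg P c R b = (\<Sum>(x, q, r)\<in>decomp3 R.
     ksign (kg * wdeg d (P @ [c] @ x)) * (\<Sum>c'\<in>letters. g q c' * f (P @ [c] @ x @ [c'] @ r) b))"

definition circ_across ::
    "int \<Rightarrow> 'r::comm_ring_1 cod \<Rightarrow> 'r cod \<Rightarrow> int \<Rightarrow> letter list \<Rightarrow> letter \<Rightarrow> letter list \<Rightarrow> letter \<Rightarrow> 'r" where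
  "circ_across d f g kg P c R b = (\<Sum>(p1, p2)\<in>decomp2 P. \<Sum>(r1, r2)\<in>decomp2 R.
     ksign (kg * wdeg d p1) * (\<Sum>c'\<in>letters. g (p2 @ [c] @ r1) c' * f (p1 @ [c'] @ r2) b))"

lemma circ_append_letter:
  "circ d f g kg (P @ [c] @ R) b
     = circ_in_prefix d f g kg P c R b + circ_in_suffix d f g kg P c R b + circ_across d f g kg P c R b"
  unfolding circ_decomp3 circ_in_prefix_def circ_in_suffix_def circ_across_def
  by (simp add: sum_decomp3_around_letter)

lemma mult_sum_letters_sum_swap:
  "x * (\<Sum>c\<in>letters. h c * (\<Sum>t\<in>T. G t c)) = (\<Sum>t\<in>T. x * (\<Sum>c\<in>letters. h c * G t c :: 'r::comm_ring_1))"
  by (simp add: sum_distrib_left sum.distrib algebra_simps)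

lemma sum_circ_in_prefix:
  "(\<Sum>(P, Q, R)\<in>decomp3 w. ksign (kh * wdeg d P) * (\<Sum>c\<in>letters. h Q c * circ_in_prefix d f g kg P c R b))
     = brace d f g kg h kh w b"
proof -
  have "ksign (kh * wdeg d P) * (\<Sum>c\<in>letters. h Q c * circ_in_prefix d f g kg P c R b)
      = (\<Sum>(a, q, x)\<in>decomp3 P. ksign (kh * wdeg d (a @ q @ x)) * ksign (kg * wdeg d a) *
          (\<Sum>c\<in>letters. \<Sum>c'\<in>letters. h Q c * g q c' * f (a @ [c'] @ x @ [c] @ R) b))" for P Q R
    unfolding circ_in_prefix_def mult_sum_letters_sum_swap
    by (rule sum.cong[OF refl], clarify) (simp add: algebra_simps)
  then show ?thesis
    unfolding brace_def sum_decomp3_nested_left[symmetric] by simp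
qed

lemma sum_circ_in_suffix:
  assumes "hom_mod2 d h kh"
  shows "(\<Sum>(P, Q, R)\<in>decomp3 w. ksign (kh * wdeg d P) * (\<Sum>c\<in>letters. h Q c * circ_in_suffix d f g kg P c R b))
     = ksign (kg * kh) * brace d f h kh g kg w b"
proof -
  let ?F = "\<lambda>P Q x q r. \<Sum>c\<in>letters. \<Sum>c'\<in>letters. h Q c * g q c' * f (P @ [c] @ x @ [c'] @ r) b"
  have inner: "ksign (kh * wdeg d P) * (\<Sum>c\<in>letters. h Q c * circ_in_suffix d f g kg P c R b)
      = (\<Sum>(x, q, r)\<in>decomp3 R. ksign (kg * kh) *
          (ksign (kh * wdeg d P) * ksign (kg * wdeg d (P @ Q @ x)) * ?F P Q x q r))" for P Q R
    unfolding circ_in_suffix_def mult_sum_letters_sum_swap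
  proof (rule sum.cong[OF refl], clarify)
    fix x q r
    let ?G = "\<lambda>c. \<Sum>c'\<in>letters. g q c' * f (P @ [c] @ x @ [c'] @ r) b"
    have "h Q c * (ksign (kg * wdeg d (P @ [c] @ x)) * ?G c)
        = h Q c * (ksign (kg * kh) * ksign (kg * wdeg d (P @ Q @ x))) * ?G c" for c
      using hom_mod2_sign[OF assms, of Q c kg P x] by (simp only: mult.assoc[symmetric])
    then show "ksign (kh * wdeg d P) * (\<Sum>c\<in>letters. h Q c * (ksign (kg * wdeg d (P @ [c] @ x)) * ?G c))
        = ksign (kg * kh) * (ksign (kh * wdeg d P) * ksign (kg * wdeg d (P @ Q @ x)) * ?F P Q x q r)"
      by (simp only:) (simp add: sum_distrib_left algebra_simps)
  qed
  have "(\<Sum>(P, Q, R)\<in>decomp3 w. ksign (kh * wdeg d P) * (\<Sum>c\<in>letters. h Q c * circ_in_suffix d f g kg P c R b))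
      = (\<Sum>(P, Q, x, q, r)\<in>decomp5 w. ksign (kg * kh) *
          (ksign (kh * wdeg d P) * ksign (kg * wdeg d (P @ Q @ x)) * ?F P Q x q r))"
    unfolding inner by (rule sum_decomp3_nested_right)
  also have "\<dots> = ksign (kg * kh) * brace d f h kh g kg w b"
    unfolding brace_def sum_distrib_left
    by (rule sum.cong[OF refl], clarify) (simp add: algebra_simps sum.swap[of _ letters letters])
  finally show ?thesis .
qed

lemma sum_circ_across:
  "(\<Sum>(P, Q, R)\<in>decomp3 w. ksign (kh * wdeg d P) * (\<Sum>c\<in>letters. h Q c * circ_across d f g kg P c R b))
     = circ d f (circ d g h kh) (kg + kh) w b"
proof -
  let ?s = "\<lambda>p1 p2. ksign (kh * wdeg d (p1 @ p2)) * ksign (kg * wdeg d p1)"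
  let ?F = "\<lambda>p1 p2 Q r1 r2. \<Sum>c\<in>letters. \<Sum>c'\<in>letters. h Q c * g (p2 @ [c] @ r1) c' * f (p1 @ [c'] @ r2) b"
  have inner: "ksign (kh * wdeg d P) * (\<Sum>c\<in>letters. h Q c * circ_across d f g kg P c R b)
      = (\<Sum>(p1, p2)\<in>decomp2 P. \<Sum>(r1, r2)\<in>decomp2 R. ?s p1 p2 * ?F p1 p2 Q r1 r2)" for P Q R
    unfolding circ_across_def mult_sum_letters_sum_swap
  proof (rule sum.cong[OF refl], clarify)
    fix p1 p2 assume "(p1, p2) \<in> decomp2 P"
    then show "ksign (kh * wdeg d P) * (\<Sum>c\<in>letters. h Q c * (\<Sum>(r1, r2)\<in>decomp2 R.
          ksign (kg * wdeg d p1) * (\<Sum>c'\<in>letters. g (p2 @ [c] @ r1) c' * f (p1 @ [c'] @ r2) b)))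
        = (\<Sum>(r1, r2)\<in>decomp2 R. ?s p1 p2 * ?F p1 p2 Q r1 r2)"
      unfolding mult_sum_letters_sum_swap
      by (intro sum.cong refl) (auto simp: algebra_simps)
  qed
  have "(\<Sum>(P, Q, R)\<in>decomp3 w. ksign (kh * wdeg d P) * (\<Sum>c\<in>letters. h Q c * circ_across d f g kg P c R b))
      = (\<Sum>(p1, p2, Q, r1, r2)\<in>decomp5 w. ?s p1 p2 * ?F p1 p2 Q r1 r2)"
    unfolding inner by (rule sum_decomp3_nested_outer)
  also have "\<dots> = (\<Sum>(p1, Q', r2)\<in>decomp3 w. \<Sum>(p2, Q, r1)\<in>decomp3 Q'. ?s p1 p2 * ?F p1 p2 Q r1 r2)"
    by (rule sum_decomp3_nested_middle[symmetric])
  also have "\<dots> = circ d f (circ d g h kh) (kg + kh) w b"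
    unfolding circ_decomp3[of _ f] circ_decomp3[of _ g]
  proof (rule sum.cong[OF refl], clarify)
    fix p1 Q' r2
    show "(\<Sum>(p2, Q, r1)\<in>decomp3 Q'. ?s p1 p2 * ?F p1 p2 Q r1 r2)
        = ksign ((kg + kh) * wdeg d p1) * (\<Sum>c'\<in>letters. (\<Sum>(p2, Q, r1)\<in>decomp3 Q'.
            ksign (kh * wdeg d p2) * (\<Sum>c\<in>letters. h Q c * g (p2 @ [c] @ r1) c')) * f (p1 @ [c'] @ r2) b)"
      by (simp add: sum_distrib_left sum_distrib_right sum.distrib[symmetric] case_prod_beta
          ksign_add algebra_simps)
  qed
  finally show ?thesis .
qed

lemma circ_associator:
  assumes "hom_mod2 d h kh"
  shows "circ d (circ d f g kg) h kh w b = circ d f (circ d g h kh) (kg + kh) w b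
     + brace d f g kg h kh w b + ksign (kg * kh) * brace d f h kh g kg w b"
proof -
  have "circ d (circ d f g kg) h kh w b
      = (\<Sum>(P, Q, R)\<in>decomp3 w. ksign (kh * wdeg d P) * (\<Sum>c\<in>letters. h Q c * circ_in_prefix d f g kg P c R b))
      + (\<Sum>(P, Q, R)\<in>decomp3 w. ksign (kh * wdeg d P) * (\<Sum>c\<in>letters. h Q c * circ_in_suffix d f g kg P c R b))
      + (\<Sum>(P, Q, R)\<in>decomp3 w. ksign (kh * wdeg d P) * (\<Sum>c\<in>letters. h Q c * circ_across d f g kg P c R b))"
    unfolding circ_decomp3[of _ "circ d f g kg"] circ_append_letter
    by (simp add: sum.distrib distrib_left case_prod_beta)
  then show ?thesis
    unfolding sum_circ_in_prefix sum_circ_in_suffix[OF assms] sum_circ_across by (simp add: algebra_simps)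
qed

lemma circ_outer_diff:
  "circ d (\<lambda>w b. f1 w b - c * f2 w b) g kg w b = circ d f1 g kg w b - c * circ d f2 g kg w b"
  unfolding circ_def by (simp add: sum_subtractf sum_distrib_left algebra_simps)

lemma circ_inner_diff:
  "circ d f (\<lambda>w b. g1 w b - c * g2 w b) kg w b = circ d f g1 kg w b - c * circ d f g2 kg w b"
  unfolding circ_def by (simp add: sum_subtractf sum_distrib_left algebra_simps)

lemma circ_outer_add:
  "circ d (\<lambda>w b. f1 w b + f2 w b) g kg w b = circ d f1 g kg w b + circ d f2 g kg w b"
  unfolding circ_def by (simp add: sum.distrib algebra_simps)

lemma circ_inner_add:
  "circ d f (\<lambda>w b. g1 w b + g2 w b) kg w b = circ d f g1 kg w b + circ d f g2 kg w b"
  unfolding circ_def by (simp add: sum.distrib algebra_simps)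

lemma circ_outer_smult:
  "circ d (\<lambda>w b. c * f1 w b) g kg w b = c * circ d f1 g kg w b"
  unfolding circ_def by (simp add: sum_distrib_left algebra_simps)

lemma circ_inner_smult:
  "circ d f (\<lambda>w b. c * g1 w b) kg w b = c * circ d f g1 kg w b"
  unfolding circ_def by (simp add: sum_distrib_left algebra_simps)

lemma circ_inner_zero:
  "(\<And>w b. g w b = 0) \<Longrightarrow> circ d f g kg w b = 0"
  unfolding circ_def by simp

lemma circ_outer_zero:
  "(\<And>w b. f w b = 0) \<Longrightarrow> circ d f g kg w b = 0"
  unfolding circ_def by simp

lemma hdiff_eq: "hdiff d m k f w b = circ d f m (-1) w b - ksign k * circ d m f k w b"
  unfolding hdiff_def br_def by simp

lemma hdiff_square_zero:
  assumes pm: "hom_mod2 d m (-1)" and pf: "hom_mod2 d f k" and mm: "\<And>w b. circ d m m (-1) w b = 0"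
  shows "hdiff d m (k - 1) (hdiff d m k f) w b = 0"
proof -
  let ?fm = "circ d f m (-1)" and ?mf = "circ d m f k"
  have df: "hdiff d m k f = (\<lambda>w b. ?fm w b - ksign k * ?mf w b)"
    by (rule ext, rule ext) (simp add: hdiff_eq)
  \<comment> \<open>The associators of (f, m, m), (m, f, m) and (m, m, f) express the four composites through
    m circ m = 0 and two braces, which cancel.\<close>
  have A: "circ d ?fm m (-1) w b = 0"
    using circ_associator[OF pm, of f m "-1" w b] circ_inner_zero[of "circ d m m (-1)", OF mm]
    by simp
  have B: "circ d ?mf m (-1) w b = circ d m ?fm (k - 1) w b + brace d m f k m (-1) w b + ksign k * brace d m m (-1) f k w b"
    using circ_associator[OF pm, of m f k w b] by (simp add: algebra_simps)
  have C0: "brace d m m (-1) f k w b + (circ d m ?mf (k - 1) w b + ksign k * brace d m f k m (-1) w b) = 0"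
    using circ_associator[OF pf, of m m "-1" w b] circ_outer_zero[of "circ d m m (-1)", OF mm]
    by (simp add: algebra_simps)
  have C: "circ d m ?mf (k - 1) w b = - brace d m m (-1) f k w b - ksign k * brace d m f k m (-1) w b"
    using C0 by (simp add: eq_neg_iff_add_eq_0 algebra_simps)
  have "hdiff d m (k - 1) (hdiff d m k f) w b
      = circ d (hdiff d m k f) m (-1) w b - ksign (k - 1) * circ d m (hdiff d m k f) (k - 1) w b"
    by (simp add: hdiff_eq)
  also have "\<dots> = (circ d ?fm m (-1) w b - ksign k * circ d ?mf m (-1) w b)
      - ksign (k - 1) * (circ d m ?fm (k - 1) w b - ksign k * circ d m ?mf (k - 1) w b)"
    unfolding df circ_outer_diff circ_inner_diff by simp
  also have "ksign (k - 1) = - (ksign k :: 'a)"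
    unfolding ksign_def by auto
  finally show ?thesis unfolding A B C by (simp add: algebra_simps)
qed

lemma hdiff_add: "hdiff d m k (\<lambda>w b. f w b + g w b) w b = hdiff d m k f w b + hdiff d m k g w b"
  unfolding hdiff_eq circ_outer_add circ_inner_add by (simp add: algebra_simps)

lemma hdiff_diff: "hdiff d m k (\<lambda>w b. f w b - g w b) w b = hdiff d m k f w b - hdiff d m k g w b"
proof -
  have a: "circ d (\<lambda>w b. f w b - g w b) m (-1) w b = circ d f m (-1) w b - circ d g m (-1) w b"
    using circ_outer_diff[of d f 1 g m "-1" w b] by simp
  have b: "circ d m (\<lambda>w b. f w b - g w b) k w b = circ d m f k w b - circ d m g k w b"
    using circ_inner_diff[of d m f 1 g k w b] by simp
  show ?thesis unfolding hdiff_eq a b by (simp add: algebra_simps)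
qed

lemma hdiff_smult: "hdiff d m k (\<lambda>w b. r * f w b) w b = r * hdiff d m k f w b"
  unfolding hdiff_eq circ_outer_smult circ_inner_smult by (simp add: algebra_simps)

lemma hdiff_shift: "even j \<Longrightarrow> hdiff d m (j + k) G = hdiff d m k G"
proof (intro ext)
  fix w b assume j: "even j"
  have a: "ksign (j + k) = (ksign k :: 'a)" using j by (simp add: ksign_add ksign_even)
  have b: "circ d m G (j + k) w b = circ d m G k w b"
    unfolding circ_decomp3 using j by (intro sum.cong[OF refl]) (auto simp: distrib_right ksign_add ksign_even)
  show "hdiff d m (j + k) G w b = hdiff d m k G w b" unfolding hdiff_eq a b ..
qed

lemma hdiff_zero: "(\<And>v c. G v c = 0) \<Longrightarrow> hdiff d m k G w b = 0"
  unfolding hdiff_eq by (simp add: circ_inner_zero circ_outer_zero)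

lemma letter_neq_One: "x \<noteq> One \<longleftrightarrow> x = Y" by (cases x) auto

lemma Yword_eq: "One \<notin> set w \<Longrightarrow> w = replicate (length w) Y"
  by (induction w) (auto simp: letter_neq_One[symmetric])

lemma wdeg_replicate: "wdeg d (replicate n Y) = int n * (d + 2)"
  by (induction n) (auto simp: algebra_simps)

lemma unit_decomp: "One \<in> set w \<Longrightarrow> \<exists>a z. w = replicate a Y @ One # z"
proof (induction w)
  case Nil then show ?case by simp
next
  case (Cons x w)
  show ?case
  proof (cases x)
    case One then show ?thesis by (intro exI[of _ 0]) auto
  next
    case Y
    then have "One \<in> set w" using Cons.prems by simp
    then obtain a z where "w = replicate a Y @ One # z" using Cons.IH by blast
    then show ?thesis using Y by (intro exI[of _ "Suc a"]) auto
  qed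
qed

lemma first_unit_at:
  assumes "One \<in> set (take (Suc p) q)" "One \<notin> set (take p q)"
  shows "\<exists>z. q = replicate p Y @ One # z"
  using assms
proof (induction p arbitrary: q)
  case 0
  then obtain x q' where "q = x # q'" by (cases q) auto
  then show ?case using 0 by auto
next
  case (Suc p)
  then obtain x q' where q: "q = x # q'" by (cases q) auto
  then have x: "x = Y" using Suc.prems by (cases x) auto
  have "One \<in> set (take (Suc p) q')" "One \<notin> set (take p q')" using Suc.prems q x by auto
  then obtain z where "q' = replicate p Y @ One # z" using Suc.IH by blast
  then show ?case using q x by auto
qed

lemma butlast_Cons_replicate: "butlast (x # replicate n x) = replicate n x"
  by (induction n) auto

lemma Cons_butlast_replicate: "0 < n \<Longrightarrow> x # butlast (replicate n x) = replicate n x"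
  by (induction n) auto

lemma sum_decomp3_outer_length_1:
  "(\<Sum>(P, Q, R)\<in>decomp3 W. if length P + length R = 1 then X P Q R else 0)
   = (if W = [] then 0 else X [hd W] (tl W) [] + X [] (butlast W) [last W])"
proof (cases "W = []")
  case True
  then show ?thesis by (simp add: decomp3_Nil)
next
  case False
  let ?D = "{([hd W], tl W, []), ([], butlast W, [last W])}"
  have "(\<Sum>(P, Q, R)\<in>decomp3 W. if length P + length R = 1 then X P Q R else 0)
       = (\<Sum>(P, Q, R)\<in>?D. if length P + length R = 1 then X P Q R else 0)"
  proof (rule sum.mono_neutral_right)
    show "?D \<subseteq> decomp3 W" using False by auto
    have "(P, Q, R) \<in> ?D" if "P @ Q @ R = W" "length P + length R = 1" for P Q R
      using that by (auto simp: add_is_1 length_Suc_conv butlast_append)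
    then show "\<forall>t\<in>decomp3 W - ?D. (case t of (P, Q, R) \<Rightarrow> if length P + length R = 1 then X P Q R else 0) = 0"
      by fastforce
  qed simp
  then show ?thesis using False by simp
qed

lemma sum_decomp3_replicate:
  "(\<Sum>(P, Q, R)\<in>decomp3 (replicate N Y). G (length P + length R)) = (\<Sum>s\<le>N. of_nat (s + 1) * G s)"
proof -
  have "(\<Sum>(P, Q, R)\<in>decomp3 (replicate N Y). G (length P + length R)) = (\<Sum>(s, a)\<in>Sigma {..N} (\<lambda>s. {..s}). G s)"
  proof (rule sum.reindex_bij_witness[where i = "\<lambda>(s, a). (replicate a Y, replicate (N - s) Y, replicate (s - a) Y)"
        and j = "\<lambda>(P, Q, R). (length P + length R, length P)"])
    fix t assume "t \<in> decomp3 (replicate N Y)"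
    then obtain P Q R where t: "t = (P, Q, R)" "P @ Q @ R = replicate N Y" by (cases t) auto
    then have "One \<notin> set P" "One \<notin> set Q" "One \<notin> set R" by (metis Un_iff in_set_replicate letter.distinct(1) set_append)+
    then have "P = replicate (length P) Y" "Q = replicate (length Q) Y" "R = replicate (length R) Y"
      using Yword_eq by blast+
    moreover have "length P + length Q + length R = N" using t by (metis length_append length_replicate add.assoc)
    ultimately show "(case case t of (P, Q, R) \<Rightarrow> (length P + length R, length P) of
        (s, a) \<Rightarrow> (replicate a Y, replicate (N - s) Y, replicate (s - a) Y)) = t"
      using t by (auto simp: algebra_simps)
    show "(case t of (P, Q, R) \<Rightarrow> (length P + length R, length P)) \<in> Sigma {..N} (\<lambda>s. {..s})"
      using t \<open>length P + length Q + length R = N\<close> by auto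
    show "(case case t of (P, Q, R) \<Rightarrow> (length P + length R, length P) of (s, a) \<Rightarrow> G s) =
        (case t of (P, Q, R) \<Rightarrow> G (length P + length R))" using t by simp
  next
    fix u assume "u \<in> Sigma {..N} (\<lambda>s. {..s})"
    then obtain s a where u: "u = (s, a)" "s \<le> N" "a \<le> s" by auto
    show "(case case u of (s, a) \<Rightarrow> (replicate a Y, replicate (N - s) Y, replicate (s - a) Y) of
        (P, Q, R) \<Rightarrow> (length P + length R, length P)) = u" using u by auto
    have "replicate a Y @ replicate (N - s) Y @ replicate (s - a) Y = replicate N Y"
      using u by (simp add: replicate_add[symmetric])
    then show "(case u of (s, a) \<Rightarrow> (replicate a Y, replicate (N - s) Y, replicate (s - a) Y)) \<in> decomp3 (replicate N Y)"
      using u by simp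
  qed
  also have "\<dots> = (\<Sum>s\<le>N. \<Sum>a\<le>s. G s)" by (rule sum.Sigma[symmetric]) auto
  also have "\<dots> = (\<Sum>s\<le>N. of_nat (s + 1) * G s)" by simp
  finally show ?thesis .
qed

definition insert_unit :: "nat \<Rightarrow> letter list \<Rightarrow> letter list" where
  "insert_unit p v = take p v @ One # drop p v"

lemma insert_unit_0[simp]: "insert_unit 0 v = One # v" unfolding insert_unit_def by simp

lemma insert_unit_Suc_Cons[simp]: "insert_unit (Suc p) (x # v) = x # insert_unit p v" unfolding insert_unit_def by simp

lemma length_insert_unit[simp]: "length (insert_unit p v) = Suc (length v)" unfolding insert_unit_def by simp

lemma insert_unit_ne[simp]: "insert_unit p v \<noteq> []" unfolding insert_unit_def by simp

lemma One_in_insert_unit[simp]: "One \<in> set (insert_unit p v)" unfolding insert_unit_def by simp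

lemma wdeg_insert_unit[simp]: "wdeg d (insert_unit p v) = wdeg d v + 1"
proof -
  have "wdeg d v = wdeg d (take p v @ drop p v)" by simp
  then show ?thesis unfolding insert_unit_def by (simp only: wdeg_append wdeg_Cons) simp
qed

lemma insert_unit_replicate: "insert_unit p (replicate p Y @ z) = replicate p Y @ One # z" unfolding insert_unit_def by simp

lemma take_Suc_insert_unit: "One \<in> set (take (Suc p) (insert_unit p v))"
  unfolding insert_unit_def by (cases "p \<le> length v") (auto simp: min_def)

lemma take_Suc_insert_unit_ge: "p \<le> j \<Longrightarrow> j \<le> length w \<Longrightarrow> take (Suc j) (insert_unit p w)
    = insert_unit p (take j w)"
  unfolding insert_unit_def by (simp add: take_append min_def take_drop Suc_diff_le)

lemma drop_Suc_insert_unit_ge: "p \<le> j \<Longrightarrow> j \<le> length w \<Longrightarrow> drop (Suc j) (insert_unit p w) = drop j w"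
  unfolding insert_unit_def by (simp add: drop_append min_def Suc_diff_le)

lemma drop_insert_unit_le: "i \<le> p \<Longrightarrow> p \<le> length w \<Longrightarrow> One \<in> set (drop i (insert_unit p w))"
  unfolding insert_unit_def by (simp add: drop_append min_def)

lemma unit_in_take_middle:
  assumes "One \<in> set (take (Suc p) (P @ Q @ R))" "P \<noteq> []" "One \<notin> set P" "One \<notin> set R"
  shows "One \<in> set (take p Q)"
proof -
  have "One \<notin> set (take (Suc p) P)" using assms(3) in_set_takeD by metis
  then have "One \<in> set (take (Suc p - length P) (Q @ R))" using assms(1) by (simp add: take_append)
  moreover have "Suc p - length P \<le> p" using assms(2) by (cases P) auto
  ultimately have "One \<in> set (take p (Q @ R))"
    by (metis (no_types, lifting) in_set_takeD order.refl set_take_subset_set_take subsetD)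
  then show ?thesis using assms(4) by (auto simp: take_append dest: in_set_takeD)
qed

lemma sum_decomp2_insert_unit:
  assumes pw: "p \<le> length w"
    and z1: "\<And>i. i \<le> p \<Longrightarrow> FI (take i (insert_unit p w)) (drop i (insert_unit p w)) = 0"
    and z2: "\<And>j. j < p \<Longrightarrow> FW (take j w) (drop j w) = 0"
    and e: "\<And>j. p \<le> j \<Longrightarrow> j \<le> length w \<Longrightarrow> FW (take j w) (drop j w)
        = FI (insert_unit p (take j w)) (drop j w)"
  shows "(\<Sum>(Q, R)\<in>decomp2 w. FW Q R) = (\<Sum>(Q, R)\<in>decomp2 (insert_unit p w). FI Q R)"
proof -
  have "(\<Sum>(Q, R)\<in>decomp2 w. FW Q R) = (\<Sum>j\<le>length w. FW (take j w) (drop j w))" by (rule sum_decomp2_take_drop)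
  also have "\<dots> = (\<Sum>j\<in>{p..length w}. FW (take j w) (drop j w))"
    by (rule sum.mono_neutral_right) (use z2 in auto)
  also have "\<dots> = (\<Sum>j\<in>{p..length w}. FI (take (Suc j) (insert_unit p w)) (drop (Suc j) (insert_unit p w)))"
    by (rule sum.cong[OF refl]) (simp add: e take_Suc_insert_unit_ge drop_Suc_insert_unit_ge)
  also have "\<dots> = (\<Sum>i\<in>Suc ` {p..length w}. FI (take i (insert_unit p w)) (drop i (insert_unit p w)))"
  proof -
    have inj: "inj_on Suc {p..length w}" by simp
    show ?thesis unfolding sum.reindex[OF inj] comp_def by (rule refl)
  qed
  also have "\<dots> = (\<Sum>i\<le>length (insert_unit p w). FI (take i (insert_unit p w)) (drop i (insert_unit p w)))"
  proof (rule sum.mono_neutral_left)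
    show "Suc ` {p..length w} \<subseteq> {..length (insert_unit p w)}" by auto
    show "\<forall>i\<in>{..length (insert_unit p w)} - Suc ` {p..length w}. FI (take i (insert_unit p w)) (drop i (insert_unit p w)) = 0"
    proof
      fix i assume i: "i \<in> {..length (insert_unit p w)} - Suc ` {p..length w}"
      have "i \<le> p"
      proof (rule ccontr)
        assume "\<not> i \<le> p"
        then have "i = Suc (i - 1)" "p \<le> i - 1" "i - 1 \<le> length w" using i by auto
        then show False using i by (metis DiffD2 atLeastAtMost_iff image_eqI)
      qed
      then show "FI (take i (insert_unit p w)) (drop i (insert_unit p w)) = 0" by (rule z1)
    qed
  qed simp
  also have "\<dots> = (\<Sum>(Q, R)\<in>decomp2 (insert_unit p w). FI Q R)" by (rule sum_decomp2_take_drop[symmetric])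
  finally show ?thesis .
qed

definition unit_homotopy :: "nat \<Rightarrow> 'r::comm_ring_1 cod \<Rightarrow> 'r cod" where
  "unit_homotopy p g = (\<lambda>v b. if p \<le> length v then g (insert_unit p v) b else 0)"

definition units_killed :: "'r::comm_ring_1 cod \<Rightarrow> nat \<Rightarrow> bool" where
  "units_killed g p \<longleftrightarrow> (\<forall>q c. One \<in> set (take p q) \<longrightarrow> g q c = 0)"

definition normalized :: "'r::comm_ring_1 cod \<Rightarrow> bool" where
  "normalized g \<longleftrightarrow> (\<forall>q c. One \<in> set q \<longrightarrow> g q c = 0)"

lemma unit_homotopy_Y: "(\<lambda>v b. unit_homotopy (Suc p) g (Y # v) b) = unit_homotopy p (\<lambda>v b. g (Y # v) b)"
  unfolding unit_homotopy_def by (intro ext) simp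

lemma units_killed_Y: "units_killed g (Suc p) \<Longrightarrow> units_killed (\<lambda>v b. g (Y # v) b) p"
  unfolding units_killed_def by simp

lemma units_killed_One: "units_killed g (Suc p) \<Longrightarrow> g (One # v) b = 0"
  unfolding units_killed_def by simp

lemma units_killed_unit_homotopy: "units_killed g p \<Longrightarrow> units_killed (unit_homotopy p g) p"
  unfolding units_killed_def unit_homotopy_def insert_unit_def by auto

lemma normalized_Y: "normalized G \<Longrightarrow> normalized (\<lambda>v b. G (Y # v) b)" unfolding normalized_def by simp

lemma normalized_One: "normalized G \<Longrightarrow> G (One # v) b = 0" unfolding normalized_def by simp

lemma hdiff_homotopy_eq:
  assumes "p \<le> length w"
  shows "hdiff d m (k + 1) (unit_homotopy p g) w b + unit_homotopy p (hdiff d m k g) w b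
    = (circ d (unit_homotopy p g) m (-1) w b + circ d g m (-1) (insert_unit p w) b)
      + ksign k * (circ d m (unit_homotopy p g) (k + 1) w b - circ d m g k (insert_unit p w) b)"
proof -
  have "ksign (k + 1) = - (ksign k :: 'a)" by (rule ksign_Suc)
  moreover have "unit_homotopy p (hdiff d m k g) w b = hdiff d m k g (insert_unit p w) b"
    unfolding unit_homotopy_def using assms by simp
  ultimately show ?thesis unfolding hdiff_eq by (simp add: algebra_simps)
qed

lemma fps_mult_eq_0_imp_right:
  fixes p q :: "'a::comm_ring_1 fps"
  assumes nonzd: "\<forall>r. r * fps_nth p 0 = 0 \<longrightarrow> r = 0" and "p * q = 0"
  shows "q = 0"
proof -
  have "fps_nth q n = 0" for n
  proof (induction n rule: less_induct)
    case (less n)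
    have "0 = (\<Sum>i\<le>n. fps_nth p i * fps_nth q (n - i))"
      using \<open>p * q = 0\<close> by (metis atLeast0AtMost fps_mult_nth fps_zero_nth)
    also have "\<dots> = (\<Sum>i\<in>{0}. fps_nth p i * fps_nth q (n - i))"
      by (rule sum.mono_neutral_right) (use less in auto)
    finally show ?case using nonzd by (simp add: mult.commute)
  qed
  then show ?thesis by (simp add: fps_eq_iff)
qed

definition component_series :: "'a cod \<Rightarrow> letter \<Rightarrow> 'a fps" where
  "component_series x b = Abs_fps (\<lambda>n. x (replicate n Y) b)"

definition series_cochain :: "letter \<Rightarrow> 'a::zero fps \<Rightarrow> 'a cod" where
  "series_cochain b p = (\<lambda>w c. if One \<notin> set w \<and> c = b then fps_nth p (length w) else 0)"

lemma normalized_series_cochain: "normalized (series_cochain b p)"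
  unfolding normalized_def series_cochain_def by simp

lemma series_cochain_0[simp]: "series_cochain b 0 = (\<lambda>w c. 0)"
  by (simp add: series_cochain_def fun_eq_iff)

lemma component_series_series_cochain: "component_series (series_cochain b p) c = (if c = b then p else 0)"
  unfolding component_series_def series_cochain_def by (simp add: fps_eq_iff)

lemma normalized_eq_series_cochain:
  assumes "normalized x" and "component_series x Y = 0"
  shows "x = series_cochain One (component_series x One)"
proof (intro ext)
  fix w b
  show "x w b = series_cochain One (component_series x One) w b"
  proof (cases "One \<in> set w")
    case True
    then show ?thesis using assms(1) unfolding normalized_def series_cochain_def by simp
  next
    case False
    then obtain n where w: "w = replicate n Y" by (metis Yword_eq)
    have "fps_nth (component_series x Y) n = 0" using assms(2) by simp
    then show ?thesis unfolding w series_cochain_def component_series_def by (cases b) simp_all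
  qed
qed

lemma component_series_0[simp]: "component_series (\<lambda>w c. 0) b = 0"
  unfolding component_series_def by (simp add: fps_eq_iff)

lemma fps_const_ksign_mult_eq_0_iff[simp]: "fps_const (ksign k) * p = 0 \<longleftrightarrow> p = (0 :: 'a::comm_ring_1 fps)"
proof
  assume "fps_const (ksign k) * p = 0"
  then have "fps_const (ksign k) * (fps_const (ksign k) * p) = 0" by simp
  then show "p = 0" by (simp add: mult.assoc[symmetric])
qed simp

locale even_moore =
  fixes Rg :: "int \<Rightarrow> 'r::comm_ring_1 set" and d :: int and m :: "'r cod"
  assumes graded: "evenly_graded_ring Rg"
    and moore: "even_moore_algebra Rg d m"
begin

lemma d_even: "even d" using moore unfolding even_moore_algebra_def by simp

lemma m_hom: "hom Rg d (-1) m" using moore unfolding even_moore_algebra_def by simp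

lemma m_circ_m: "circ d m m (-1) w b = 0" using moore unfolding even_moore_algebra_def by simp

lemma m_Nil[simp]: "m [] b = 0" using moore unfolding even_moore_algebra_def by simp

lemma m_unit_left: "m [One, x] b = (if b = x then 1 else 0)" using moore unfolding even_moore_algebra_def by simp

lemma m_unit_right: "m [x, One] b = ksign (ldeg d x - 1) * (if b = x then 1 else 0)"
  using moore unfolding even_moore_algebra_def by simp

lemma m_unit_arg: "length w \<noteq> 2 \<Longrightarrow> One \<in> set w \<Longrightarrow> m w b = 0"
  using moore unfolding even_moore_algebra_def by simp

lemma m_Y_unit: "m [Y, One] b = (if b = Y then -1 else 0)"
proof -
  have "ksign (ldeg d Y - 1) = (-1 :: 'r)" using d_even by (intro ksign_odd) simp
  then show ?thesis using m_unit_right[of Y b] by simp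
qed

lemma m_unit_unit: "m [One, One] b = (if b = One then 1 else 0)" using m_unit_left by simp

lemma Rg_zero: "0 \<in> Rg k" using graded unfolding evenly_graded_ring_def by simp

lemma Rg_add: "a \<in> Rg k \<Longrightarrow> b \<in> Rg k \<Longrightarrow> a + b \<in> Rg k" using graded unfolding evenly_graded_ring_def by simp

lemma Rg_uminus: "a \<in> Rg k \<Longrightarrow> - a \<in> Rg k" using graded unfolding evenly_graded_ring_def by simp

lemma Rg_diff: "a \<in> Rg k \<Longrightarrow> b \<in> Rg k \<Longrightarrow> a - b \<in> Rg k"
  using Rg_add[of a k "- b"] Rg_uminus[of b k] by simp

lemma Rg_mult: "a \<in> Rg j \<Longrightarrow> b \<in> Rg k \<Longrightarrow> a * b \<in> Rg (j + k)" using graded unfolding evenly_graded_ring_def by simp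

lemma Rg_odd: "odd k \<Longrightarrow> a \<in> Rg k \<Longrightarrow> a = 0" using graded unfolding evenly_graded_ring_def by auto

lemma Rg_sum: "finite A \<Longrightarrow> (\<And>x. x \<in> A \<Longrightarrow> f x \<in> Rg k) \<Longrightarrow> sum f A \<in> Rg k"
  by (induction A rule: finite_induct) (auto intro: Rg_zero Rg_add)

lemma Rg_ksign: "a \<in> Rg k \<Longrightarrow> ksign n * a \<in> Rg k"
  unfolding ksign_def by (auto intro: Rg_uminus)

lemma hom_imp_hom_mod2: "hom Rg d k f \<Longrightarrow> hom_mod2 d f k"
  unfolding hom_mod2_def hom_def using Rg_odd by blast

lemma m_hom_mod2: "hom_mod2 d m (-1)" using hom_imp_hom_mod2[OF m_hom] .

lemma hom_odd: "hom Rg d k f \<Longrightarrow> odd (k + wdeg d w - ldeg d b) \<Longrightarrow> f w b = 0"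
  unfolding hom_def using Rg_odd by blast

lemma hom_add: "hom Rg d k f \<Longrightarrow> hom Rg d k g \<Longrightarrow> hom Rg d k (\<lambda>w b. f w b + g w b)"
  unfolding hom_def by (auto intro: Rg_add)

lemma hom_diff: "hom Rg d k f \<Longrightarrow> hom Rg d k g \<Longrightarrow> hom Rg d k (\<lambda>w b. f w b - g w b)"
  unfolding hom_def by (auto intro: Rg_diff)

lemma wdeg_Yword: "One \<notin> set w \<Longrightarrow> wdeg d w = int (length w) * (d + 2)"
  by (metis Yword_eq wdeg_replicate)

lemma m_Yword_Y: "One \<notin> set w \<Longrightarrow> m w Y = 0"
  by (rule hom_odd[OF m_hom]) (use d_even in \<open>auto simp: wdeg_Yword\<close>)

definition u_coeff :: "nat \<Rightarrow> 'r" where "u_coeff n = m (replicate n Y) One"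

lemma m_Yword: "One \<notin> set w \<Longrightarrow> m w b = (if b = One then u_coeff (length w) else 0)"
  unfolding u_coeff_def using m_Yword_Y[of w] Yword_eq[of w] by (cases b) auto

lemma ksign_Yword: "One \<notin> set w \<Longrightarrow> ksign (k * wdeg d w) = (1 :: 'r)"
  using d_even by (intro ksign_even) (auto simp: wdeg_Yword)

lemma ksign_dp2[simp]: "ksign (d + 2) = (1 :: 'r)"
  using d_even by (intro ksign_even) simp

lemma ksign_ldegY: "ksign (k * ldeg d Y) = (1 :: 'r)"
  using d_even by (intro ksign_even) simp

lemma circ_hom:
  assumes "hom Rg d kf f" "hom Rg d kg g"
  shows "hom Rg d (kf + kg) (circ d f g kg)"
  unfolding hom_def
proof (intro allI)
  fix w b
  show "circ d f g kg w b \<in> Rg (kf + kg + wdeg d w - ldeg d b)"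
    unfolding circ_decomp3
  proof (rule Rg_sum, simp, clarify)
    fix p q r assume pqr: "(p, q, r) \<in> decomp3 w"
    show "ksign (kg * wdeg d p) * (\<Sum>c\<in>letters. g q c * f (p @ [c] @ r) b) \<in> Rg (kf + kg + wdeg d w - ldeg d b)"
    proof (rule Rg_ksign, rule Rg_sum, simp)
      fix c
      have "g q c \<in> Rg (kg + wdeg d q - ldeg d c)" using assms(2) unfolding hom_def by blast
      moreover have "f (p @ [c] @ r) b \<in> Rg (kf + wdeg d (p @ [c] @ r) - ldeg d b)" using assms(1) unfolding hom_def by blast
      ultimately have "g q c * f (p @ [c] @ r) b \<in> Rg ((kg + wdeg d q - ldeg d c) + (kf + wdeg d (p @ [c] @ r) - ldeg d b))"
        by (rule Rg_mult)
      moreover have "(kg + wdeg d q - ldeg d c) + (kf + wdeg d (p @ [c] @ r) - ldeg d b) = kf + kg + wdeg d w - ldeg d b"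
        using pqr by auto
      ultimately show "g q c * f (p @ [c] @ r) b \<in> Rg (kf + kg + wdeg d w - ldeg d b)" by metis
    qed
  qed
qed

lemma hdiff_hom:
  assumes "hom Rg d k f"
  shows "hom Rg d (k - 1) (hdiff d m k f)"
proof -
  have a: "hom Rg d (k + -1) (circ d f m (-1))" by (rule circ_hom[OF assms m_hom])
  have b: "hom Rg d (-1 + k) (circ d m f k)" by (rule circ_hom[OF m_hom assms])
  show ?thesis unfolding hom_def hdiff_eq
  proof (intro allI)
    fix w b
    have "circ d f m (-1) w b \<in> Rg (k - 1 + wdeg d w - ldeg d b)" using a unfolding hom_def by simp
    moreover have "circ d m f k w b \<in> Rg (k - 1 + wdeg d w - ldeg d b)" using b unfolding hom_def by simp
    ultimately show "circ d f m (-1) w b - ksign k * circ d m f k w b \<in> Rg (k - 1 + wdeg d w - ldeg d b)"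
      by (intro Rg_diff Rg_ksign)
  qed
qed

lemma hdiff_hdiff:
  assumes "hom Rg d (k + 1) G"
  shows "hdiff d m k (hdiff d m (k + 1) G) w b = 0"
  using hdiff_square_zero[OF m_hom_mod2 hom_imp_hom_mod2[OF assms] m_circ_m] by simp

lemma hom_unit_homotopy:
  assumes "hom Rg d k g" shows "hom Rg d (k + 1) (unit_homotopy p g)"
  unfolding hom_def
proof (intro allI)
  fix w b
  have "g (insert_unit p w) b \<in> Rg (k + wdeg d (insert_unit p w) - ldeg d b)" using assms unfolding hom_def by blast
  then show "unit_homotopy p g w b \<in> Rg (k + 1 + wdeg d w - ldeg d b)"
    unfolding unit_homotopy_def by (auto simp: Rg_zero algebra_simps)
qed

lemma hdiff_local:
  assumes "\<And>v c. length v \<le> length w \<Longrightarrow> G v c = G' v c"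
  shows "hdiff d m k G w b = hdiff d m k G' w b"
proof -
  have a: "circ d G m (-1) w b = circ d G' m (-1) w b"
    unfolding circ_decomp3
  proof (rule sum.cong[OF refl], clarify)
    fix p q r assume pqr: "(p, q, r) \<in> decomp3 w"
    show "ksign (- 1 * wdeg d p) * (\<Sum>c\<in>letters. m q c * G (p @ [c] @ r) b)
        = ksign (- 1 * wdeg d p) * (\<Sum>c\<in>letters. m q c * G' (p @ [c] @ r) b)"
    proof (cases "q = []")
      case False
      then have "length (p @ [c] @ r) \<le> length w" for c using pqr by (cases q) auto
      then show ?thesis using assms by simp
    qed simp
  qed
  have b: "circ d m G k w b = circ d m G' k w b"
    unfolding circ_decomp3
  proof (rule sum.cong[OF refl], clarify)
    fix p q r assume pqr: "(p, q, r) \<in> decomp3 w"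
    then have "length q \<le> length w" by auto
    then show "ksign (k * wdeg d p) * (\<Sum>c\<in>letters. G q c * m (p @ [c] @ r) b)
        = ksign (k * wdeg d p) * (\<Sum>c\<in>letters. G' q c * m (p @ [c] @ r) b)"
      using assms by simp
  qed
  show ?thesis unfolding hdiff_eq a b ..
qed

lemma circ_m_Cons:
  "circ d G m (-1) (x # v) b = (\<Sum>(q, r)\<in>decomp2 v. \<Sum>c\<in>letters. m (x # q) c * G (c # r) b)
     + ksign (ldeg d x) * circ d (\<lambda>v b. G (x # v) b) m (-1) v b"
proof -
  have "circ d G m (-1) (x # v) b = (\<Sum>(q, r)\<in>decomp2 (x # v). ksign (- 1 * wdeg d []) * (\<Sum>c\<in>letters. m q c * G ([] @ [c] @ r) b))
      + (\<Sum>(p, q, r)\<in>decomp3 v. ksign (- 1 * wdeg d (x # p)) * (\<Sum>c\<in>letters. m q c * G ((x # p) @ [c] @ r) b))"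
    unfolding circ_decomp3 by (rule sum_decomp3_Cons)
  also have "(\<Sum>(q, r)\<in>decomp2 (x # v). ksign (- 1 * wdeg d []) * (\<Sum>c\<in>letters. m q c * G ([] @ [c] @ r) b))
     = (\<Sum>(q, r)\<in>decomp2 v. \<Sum>c\<in>letters. m (x # q) c * G (c # r) b)"
    by (simp add: sum_decomp2_Cons)
  also have "(\<Sum>(p, q, r)\<in>decomp3 v. ksign (- 1 * wdeg d (x # p)) * (\<Sum>c\<in>letters. m q c * G ((x # p) @ [c] @ r) b))
     = ksign (ldeg d x) * circ d (\<lambda>v b. G (x # v) b) m (-1) v b"
    unfolding circ_decomp3 sum_distrib_left
    by (rule sum.cong[OF refl]) (auto simp: ksign_diff distrib_left)
  finally show ?thesis .
qed

section \<open>The homotopy inserting the unit\<close>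

lemma sum_m_unit_Cons:
  "(\<Sum>(q, r)\<in>decomp2 v. \<Sum>c\<in>letters. m (One # q) c * G (c # r) b) = (if v = [] then 0 else G v b)"
proof (cases v)
  case Nil
  then show ?thesis by (simp add: decomp2_Nil m_unit_arg)
next
  case (Cons y v')
  have "(\<Sum>(q, r)\<in>decomp2 v'. \<Sum>c\<in>letters. m (One # y # q) c * G (c # r) b)
      = (\<Sum>c\<in>letters. m [One, y] c * G (c # v') b)"
    by (rule sum_decomp2_only_Nil) (simp add: m_unit_arg)
  also have "\<dots> = G (y # v') b" by (cases y) (auto simp: m_unit_left)
  finally show ?thesis using Cons by (simp add: sum_decomp2_Cons m_unit_arg)
qed

lemma sum_m_Y_Cons:
  assumes "\<And>r. G (One # r) b = 0"
  shows "(\<Sum>(q, r)\<in>decomp2 v. \<Sum>c\<in>letters. m (Y # q) c * G (c # r) b)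
      = (if v \<noteq> [] \<and> hd v = One then - G (Y # tl v) b else 0)"
proof -
  have t: "(\<Sum>c\<in>letters. m (Y # q) c * G (c # r) b) = (if q = [One] then - G (Y # r) b else 0)" for q r
  proof -
    have "m (Y # q) Y = (if q = [One] then -1 else 0)"
    proof (cases "One \<in> set q")
      case True
      then show ?thesis
      proof (cases "q = [One]")
        case True then show ?thesis by (simp add: m_Y_unit)
      next
        case False
        then have "length (Y # q) \<noteq> 2" using \<open>One \<in> set q\<close> by (cases q) (auto simp: letter_neq_One)
        then show ?thesis using m_unit_arg[of "Y # q" Y] \<open>One \<in> set q\<close> False by simp
      qed
    next
      case False
      then show ?thesis using m_Yword_Y[of "Y # q"] by auto
    qed
    then show ?thesis using assms by simp
  qed
  show ?thesis
  proof (cases v)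
    case Nil then show ?thesis by (simp add: decomp2_Nil t)
  next
    case (Cons y v')
    have "(\<Sum>(q, r)\<in>decomp2 v'. (if y # q = [One] then - G (Y # r) b else 0)) = (if [y] = [One] then - G (Y # v') b else 0)"
      by (rule sum_decomp2_only_Nil) auto
    then show ?thesis using Cons by (simp add: sum_decomp2_Cons t)
  qed
qed

lemma circ_m_homotopy_first_unit:
  assumes "units_killed g p"
  shows "circ d (unit_homotopy p g) m (-1) (replicate p Y @ One # z) b + circ d g m (-1) (replicate p Y @ One # One # z) b
     = (if p = 0 then 1 else -1) * g (replicate p Y @ One # z) b"
  using assms
proof (induction p arbitrary: g)
  case 0
  have s1: "(\<lambda>v b. unit_homotopy 0 g (One # v) b) = (\<lambda>v b. g (One # One # v) b)" unfolding unit_homotopy_def by simp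
  have "circ d (unit_homotopy 0 g) m (-1) (One # z) b
      = (if z = [] then 0 else g (One # z) b) - circ d (\<lambda>v b. g (One # One # v) b) m (-1) z b"
    unfolding circ_m_Cons sum_m_unit_Cons s1 by (simp add: unit_homotopy_def)
  moreover have "circ d g m (-1) (One # One # z) b
      = g (One # z) b - ((if z = [] then 0 else g (One # z) b) - circ d (\<lambda>v b. g (One # One # v) b) m (-1) z b)"
    unfolding circ_m_Cons[of g One] sum_m_unit_Cons circ_m_Cons[of "\<lambda>v b. g (One # v) b" One]
      sum_m_unit_Cons[where G = "\<lambda>v b. g (One # v) b"] by simp
  ultimately show ?case by simp
next
  case (Suc p)
  have F: "units_killed (\<lambda>v b. g (Y # v) b) p" using units_killed_Y[OF Suc.prems] .
  have z1: "unit_homotopy (Suc p) g (One # r) b = 0" for r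
    unfolding unit_homotopy_def using units_killed_One[OF Suc.prems] by simp
  have z2: "g (One # r) b = 0" for r using units_killed_One[OF Suc.prems] .
  have IH: "circ d (unit_homotopy p (\<lambda>v b. g (Y # v) b)) m (-1) (replicate p Y @ One # z) b
      + circ d (\<lambda>v b. g (Y # v) b) m (-1) (replicate p Y @ One # One # z) b
     = (if p = 0 then 1 else -1) * g (Y # replicate p Y @ One # z) b"
    using Suc.IH[OF F] by simp
  have a: "circ d (unit_homotopy (Suc p) g) m (-1) (Y # replicate p Y @ One # z) b
     = (if p = 0 then - g (Y # One # z) b else 0) + circ d (unit_homotopy p (\<lambda>v b. g (Y # v) b)) m (-1) (replicate p Y @ One # z) b"
    unfolding circ_m_Cons sum_m_Y_Cons[where G = "unit_homotopy (Suc p) g", OF z1] unit_homotopy_Y ksign_ldegY[of 1, simplified]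
    by (cases p) (auto simp: unit_homotopy_def insert_unit_def)
  have b: "circ d g m (-1) (Y # replicate p Y @ One # One # z) b
     = (if p = 0 then - g (Y # One # z) b else 0) + circ d (\<lambda>v b. g (Y # v) b) m (-1) (replicate p Y @ One # One # z) b"
    unfolding circ_m_Cons[of g Y] sum_m_Y_Cons[where G = g, OF z2] ksign_ldegY[of 1, simplified]
    by (cases p) auto
  have "circ d (unit_homotopy (Suc p) g) m (-1) (replicate (Suc p) Y @ One # z) b + circ d g m (-1) (replicate (Suc p) Y @ One # One # z) b
     = (if p = 0 then - g (Y # One # z) b else 0) + (if p = 0 then - g (Y # One # z) b else 0)
       + (circ d (unit_homotopy p (\<lambda>v b. g (Y # v) b)) m (-1) (replicate p Y @ One # z) b
      + circ d (\<lambda>v b. g (Y # v) b) m (-1) (replicate p Y @ One # One # z) b)"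
    using a b by (simp add: algebra_simps)
  also have "\<dots> = (if p = 0 then - g (Y # One # z) b else 0) + (if p = 0 then - g (Y # One # z) b else 0)
       + (if p = 0 then 1 else -1) * g (Y # replicate p Y @ One # z) b" unfolding IH ..
  finally show ?case by (cases p) (simp_all add: algebra_simps)
qed

lemma circ_m_homotopy_unit_head:
  assumes "units_killed g (Suc p)"
  shows "circ d (unit_homotopy (Suc p) g) m (-1) (One # v) b + circ d g m (-1) (insert_unit (Suc p) (One # v)) b
     = unit_homotopy (Suc p) g v b"
proof -
  have z0: "(\<lambda>v' b. unit_homotopy (Suc p) g (One # v') b) = (\<lambda>v' b. 0)"
    unfolding unit_homotopy_def using units_killed_One[OF assms] by (intro ext) simp
  have z1: "(\<lambda>v' b. g (One # v') b) = (\<lambda>v' b. 0)"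
    using units_killed_One[OF assms] by (intro ext) simp
  have "g (insert_unit p v) b = 0"
    using assms take_Suc_insert_unit[of p v] unfolding units_killed_def by blast
  then have "circ d g m (-1) (insert_unit (Suc p) (One # v)) b = 0"
    unfolding insert_unit_Suc_Cons circ_m_Cons[of g One] sum_m_unit_Cons z1 by (simp add: circ_outer_zero)
  moreover have "circ d (unit_homotopy (Suc p) g) m (-1) (One # v) b = unit_homotopy (Suc p) g v b"
    unfolding circ_m_Cons sum_m_unit_Cons z0 by (simp add: circ_outer_zero unit_homotopy_def)
  ultimately show ?thesis by simp
qed

lemma circ_m_homotopy_early_unit:
  assumes "units_killed g p" "One \<in> set (take p w)" "p \<le> length w"
  shows "circ d (unit_homotopy p g) m (-1) w b + circ d g m (-1) (insert_unit p w) b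
     = (if hd w = One then unit_homotopy p g (tl w) b else 0)"
  using assms
proof (induction p arbitrary: g w)
  case 0 then show ?case by simp
next
  case (Suc p)
  obtain x v where w: "w = x # v" using Suc.prems(2) by (cases w) auto
  show ?case
  proof (cases x)
    case One
    then show ?thesis using circ_m_homotopy_unit_head[OF Suc.prems(1)] w by simp
  next
    case Y
    have t: "One \<in> set (take p v)" "p \<le> length v" using Suc.prems w Y by auto
    then have p0: "p \<noteq> 0" by (cases p) auto
    have v0: "v \<noteq> []" using t by auto
    have z1: "unit_homotopy (Suc p) g (One # r) b = 0" for r
      unfolding unit_homotopy_def using units_killed_One[OF Suc.prems(1)] by simp
    have z2: "g (One # r) b = 0" for r using units_killed_One[OF Suc.prems(1)] .
    note IH = Suc.IH[OF units_killed_Y[OF Suc.prems(1)] t]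
    have hv: "hd (insert_unit p v) = hd v" using p0 v0 by (cases v; cases p) auto
    have g0: "g (Y # tl (insert_unit p v)) b = 0" if head: "hd v = One"
    proof -
      obtain v' where "v = One # v'" using v0 head by (cases v) auto
      then have "tl (insert_unit p v) = insert_unit (p - 1) v'" using p0 by (cases p) auto
      moreover have "One \<in> set (take (Suc p) (Y # insert_unit (p - 1) v'))"
        using take_Suc_insert_unit[of "p - 1" v'] p0 by (cases p) auto
      ultimately show ?thesis using Suc.prems(1) unfolding units_killed_def by metis
    qed
    have "circ d (unit_homotopy (Suc p) g) m (-1) (Y # v) b + circ d g m (-1) (insert_unit (Suc p) (Y # v)) b
      = (if hd v = One then - unit_homotopy (Suc p) g (Y # tl v) b else 0)
        + (if hd (insert_unit p v) = One then - g (Y # tl (insert_unit p v)) b else 0)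
        + (circ d (unit_homotopy p (\<lambda>v b. g (Y # v) b)) m (-1) v b
          + circ d (\<lambda>v b. g (Y # v) b) m (-1) (insert_unit p v) b)"
      unfolding insert_unit_Suc_Cons circ_m_Cons[of _ Y] sum_m_Y_Cons[where G = "unit_homotopy (Suc p) g", OF z1]
        sum_m_Y_Cons[where G = g, OF z2] unit_homotopy_Y ksign_ldegY[of 1, simplified]
      using v0 by simp
    also have "\<dots> = 0" unfolding IH hv using g0 by (simp add: unit_homotopy_Y[symmetric])
    finally show ?thesis using w Y by simp
  qed
qed

definition m_circ_binary :: "'r cod \<Rightarrow> int \<Rightarrow> letter list \<Rightarrow> letter \<Rightarrow> 'r" where
  "m_circ_binary G k W b = (if W = [] then 0 else
     ksign (k * ldeg d (hd W)) * (\<Sum>c\<in>letters. G (tl W) c * m [hd W, c] b)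
     + (\<Sum>c\<in>letters. G (butlast W) c * m [c, last W] b))"

definition m_circ_higher :: "'r cod \<Rightarrow> letter list \<Rightarrow> letter \<Rightarrow> 'r" where
  "m_circ_higher G W b = (if b = One then (\<Sum>(P, Q, R)\<in>decomp3 W.
     if One \<notin> set P \<and> One \<notin> set R \<and> length P + length R \<noteq> 1 then G Q Y * u_coeff (length P + length R + 1) else 0) else 0)"

lemma m_circ_term_higher:
  assumes "length P + length R \<noteq> 1"
  shows "ksign (k * wdeg d P) * (\<Sum>c\<in>letters. G Q c * m (P @ [c] @ R) b)
    = (if b = One \<and> One \<notin> set P \<and> One \<notin> set R then G Q Y * u_coeff (length P + length R + 1) else 0)"
proof -
  have l2: "length (P @ [c] @ R) \<noteq> 2" for c using assms by simp
  have "m (P @ [One] @ R) b = 0" using m_unit_arg[OF l2] by simp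
  moreover have "m (P @ [Y] @ R) b
      = (if b = One \<and> One \<notin> set P \<and> One \<notin> set R then u_coeff (length P + length R + 1) else 0)"
    using m_unit_arg[OF l2] m_Yword[of "P @ [Y] @ R" b] by (cases "One \<in> set P \<or> One \<in> set R") auto
  moreover have "One \<notin> set P \<Longrightarrow> ksign (k * wdeg d P) = (1 :: 'r)" by (rule ksign_Yword)
  ultimately show ?thesis by auto
qed

lemma m_circ_split: "circ d m G k W b = m_circ_binary G k W b + m_circ_higher G W b"
proof -
  define X where "X = (\<lambda>P Q R. ksign (k * wdeg d P) * (\<Sum>c\<in>letters. G Q c * m (P @ [c] @ R) b))"
  have "circ d m G k W b = (\<Sum>(P, Q, R)\<in>decomp3 W. X P Q R)" unfolding circ_decomp3 X_def ..
  also have "\<dots> = (\<Sum>(P, Q, R)\<in>decomp3 W. (if length P + length R = 1 then X P Q R else 0)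
        + (if length P + length R \<noteq> 1 then X P Q R else 0))"
    by (rule sum.cong) auto
  also have "\<dots> = (\<Sum>(P, Q, R)\<in>decomp3 W. if length P + length R = 1 then X P Q R else 0)
        + (\<Sum>(P, Q, R)\<in>decomp3 W. if length P + length R \<noteq> 1 then X P Q R else 0)"
    by (simp add: sum.distrib case_prod_beta)
  also have "(\<Sum>(P, Q, R)\<in>decomp3 W. if length P + length R = 1 then X P Q R else 0) = m_circ_binary G k W b"
    unfolding sum_decomp3_outer_length_1 m_circ_binary_def X_def by simp
  also have "(\<Sum>(P, Q, R)\<in>decomp3 W. if length P + length R \<noteq> 1 then X P Q R else 0)
      = (\<Sum>(P, Q, R)\<in>decomp3 W. if b = One then (if One \<notin> set P \<and> One \<notin> set R \<and> length P + length R \<noteq> 1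
          then G Q Y * u_coeff (length P + length R + 1) else 0) else 0)"
  proof (intro sum.cong refl, clarify)
    fix P Q R
    show "(if length P + length R \<noteq> 1 then X P Q R else 0)
      = (if b = One then (if One \<notin> set P \<and> One \<notin> set R \<and> length P + length R \<noteq> 1
          then G Q Y * u_coeff (length P + length R + 1) else 0) else 0)"
      unfolding X_def using m_circ_term_higher[of P R k G Q b] by auto
  qed
  also have "\<dots> = m_circ_higher G W b"
    unfolding m_circ_higher_def by (cases "b = One") simp_all
  finally show ?thesis .
qed

lemma m_circ_binary_Cons: "W \<noteq> [] \<Longrightarrow> m_circ_binary G k W b = ksign (k * ldeg d (hd W)) * (\<Sum>c\<in>letters. G (tl W) c * m [hd W, c] b)
     + (\<Sum>c\<in>letters. G (butlast W) c * m [c, last W] b)"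
  unfolding m_circ_binary_def by simp

lemma sum_m_unit_left: "(\<Sum>c\<in>letters. G c * m [One, c] b) = G b"
  by (cases b) (simp_all add: m_unit_left)

lemma m_circ_higher_prefix_Nil:
  assumes F: "units_killed G p" and W: "One \<in> set (take (Suc p) W)"
  shows "m_circ_higher G W b = (if b = One then (\<Sum>(Q, R)\<in>decomp2 W. if One \<notin> set R \<and> length R \<noteq> 1 then G Q Y * u_coeff (length R + 1) else 0) else 0)"
proof -
  obtain x v where Wx: "W = x # v" using W by (cases W) auto
  have z: "(\<Sum>(P, Q, R)\<in>decomp3 v. if One \<notin> set (x # P) \<and> One \<notin> set R \<and> length (x # P) + length R \<noteq> 1
      then G Q Y * u_coeff (length (x # P) + length R + 1) else 0) = 0"
  proof (rule sum.neutral, clarify)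
    fix P Q R assume "(P, Q, R) \<in> decomp3 v"
    then have e: "(x # P) @ Q @ R = W" using Wx by simp
    show "(if One \<notin> set (x # P) \<and> One \<notin> set R \<and> length (x # P) + length R \<noteq> 1
      then G Q Y * u_coeff (length (x # P) + length R + 1) else 0) = 0"
    proof (cases "One \<notin> set (x # P) \<and> One \<notin> set R")
      case True
      then have "One \<in> set (take p Q)" using unit_in_take_middle[of p "x # P" Q R] W e by auto
      then show ?thesis using F unfolding units_killed_def by auto
    qed auto
  qed
  show ?thesis unfolding m_circ_higher_def Wx sum_decomp3_Cons z by (simp add: case_prod_beta cong: if_cong)
qed

lemma m_circ_higher_homotopy:
  assumes F: "units_killed g p" and W: "One \<in> set (take (Suc p) w)" and pw: "p \<le> length w"
  shows "m_circ_higher (unit_homotopy p g) w b = m_circ_higher g (insert_unit p w) b"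
proof -
  have W': "One \<in> set (take (Suc p) (insert_unit p w))" by (rule take_Suc_insert_unit)
  have S: "(\<Sum>(Q, R)\<in>decomp2 w. if One \<notin> set R \<and> length R \<noteq> 1 then unit_homotopy p g Q Y * u_coeff (length R + 1) else 0)
      = (\<Sum>(Q, R)\<in>decomp2 (insert_unit p w). if One \<notin> set R \<and> length R \<noteq> 1 then g Q Y * u_coeff (length R + 1) else 0)"
  proof (rule sum_decomp2_insert_unit[OF pw])
    fix i assume "i \<le> p"
    then have "One \<in> set (drop i (insert_unit p w))" using drop_insert_unit_le pw by simp
    then show "(if One \<notin> set (drop i (insert_unit p w)) \<and> length (drop i (insert_unit p w)) \<noteq> 1
        then g (take i (insert_unit p w)) Y * u_coeff (length (drop i (insert_unit p w)) + 1) else 0) = 0" by simp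
  next
    fix j assume "j < p"
    then show "(if One \<notin> set (drop j w) \<and> length (drop j w) \<noteq> 1
        then unit_homotopy p g (take j w) Y * u_coeff (length (drop j w) + 1) else 0) = 0"
      by (simp add: unit_homotopy_def)
  next
    fix j assume "p \<le> j" "j \<le> length w"
    then show "(if One \<notin> set (drop j w) \<and> length (drop j w) \<noteq> 1
        then unit_homotopy p g (take j w) Y * u_coeff (length (drop j w) + 1) else 0)
      = (if One \<notin> set (drop j w) \<and> length (drop j w) \<noteq> 1
        then g (insert_unit p (take j w)) Y * u_coeff (length (drop j w) + 1) else 0)"
      by (simp add: unit_homotopy_def)
  qed
  show ?thesis
    unfolding m_circ_higher_prefix_Nil[OF units_killed_unit_homotopy[OF F] W] m_circ_higher_prefix_Nil[OF F W'] S ..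
qed

lemma m_circ_last_homotopy:
  assumes F: "units_killed g p" and W: "One \<in> set (take (Suc p) w)" and pw: "p \<le> length w"
  shows "(\<Sum>c\<in>letters. unit_homotopy p g (butlast w) c * m [c, last w] b)
      = (\<Sum>c\<in>letters. g (butlast (insert_unit p w)) c * m [c, last (insert_unit p w)] b)"
proof (cases "p < length w")
  case True
  have "butlast (insert_unit p w) = insert_unit p (butlast w)"
    using True unfolding insert_unit_def by (simp add: butlast_append butlast_drop take_butlast)
  moreover have "last (insert_unit p w) = last w" using True unfolding insert_unit_def by (simp add: last_append)
  moreover have "unit_homotopy p g (butlast w) c = g (insert_unit p (butlast w)) c" for c
    using True unfolding unit_homotopy_def by simp
  ultimately show ?thesis by simp
next
  case False
  then have lw: "length w = p" using pw by simp
  then have "insert_unit p w = w @ [One]" unfolding insert_unit_def by simp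
  moreover have "g w c = 0" for c using F W lw unfolding units_killed_def by simp
  moreover have "unit_homotopy p g (butlast w) c = 0" for c using lw pw W unfolding unit_homotopy_def
    by (cases w) auto
  ultimately show ?thesis by simp
qed

lemma m_circ_homotopy_first_unit:
  assumes F: "units_killed g p"
  shows "circ d m (unit_homotopy p g) (k + 1) (replicate p Y @ One # z) b - circ d m g k (replicate p Y @ One # One # z) b
     = (if p = 0 then - 2 * ksign k * g (replicate p Y @ One # z) b else 0)"
proof -
  let ?w = "replicate p Y @ One # z"
  have W: "One \<in> set (take (Suc p) ?w)" by simp
  have pw: "p \<le> length ?w" by simp
  have iw: "insert_unit p ?w = replicate p Y @ One # One # z" by (rule insert_unit_replicate)
  have higher: "m_circ_higher (unit_homotopy p g) ?w b = m_circ_higher g (replicate p Y @ One # One # z) b"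
    using m_circ_higher_homotopy[OF F W pw] iw by simp
  have last_terms: "(\<Sum>c\<in>letters. unit_homotopy p g (butlast ?w) c * m [c, last ?w] b)
     = (\<Sum>c\<in>letters. g (butlast (replicate p Y @ One # One # z)) c * m [c, last (replicate p Y @ One # One # z)] b)"
    using m_circ_last_homotopy[OF F W pw] iw by simp
  show ?thesis
  proof (cases p)
    case 0
    have "ksign ((k + 1) * ldeg d One) = - (ksign k :: 'r)" by (simp add: ksign_Suc)
    then show ?thesis using 0 higher last_terms unfolding m_circ_split
      by (simp add: m_circ_binary_Cons sum_m_unit_left unit_homotopy_def algebra_simps)
  next
    case (Suc q)
    have z1: "unit_homotopy p g (tl ?w) c = 0" for c
      using units_killed_unit_homotopy[OF F] unfolding units_killed_def Suc by simp
    have z2: "g (tl (replicate p Y @ One # One # z)) c = 0" for c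
      using F unfolding units_killed_def Suc by simp
    have "circ d m (unit_homotopy p g) (k + 1) ?w b - circ d m g k (replicate p Y @ One # One # z) b
      = (\<Sum>c\<in>letters. unit_homotopy p g (butlast ?w) c * m [c, last ?w] b)
       - (\<Sum>c\<in>letters. g (butlast (replicate p Y @ One # One # z)) c * m [c, last (replicate p Y @ One # One # z)] b)
       + (m_circ_higher (unit_homotopy p g) ?w b - m_circ_higher g (replicate p Y @ One # One # z) b)"
      unfolding m_circ_split using z1 z2 by (simp add: m_circ_binary_Cons algebra_simps del: replicate_Suc)
    then show ?thesis using higher last_terms Suc by simp
  qed
qed

lemma m_circ_homotopy_early_unit:
  assumes F: "units_killed g p" and W0: "One \<in> set (take p w)" and pw: "p \<le> length w"
  shows "circ d m (unit_homotopy p g) (k + 1) w b - circ d m g k (insert_unit p w) b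
     = (if hd w = One then ksign (k + 1) * unit_homotopy p g (tl w) b else 0)"
proof -
  have W: "One \<in> set (take (Suc p) w)" using W0 by (meson in_set_takeD set_take_subset_set_take le_SucI order.refl subsetD)
  obtain q where pq: "p = Suc q" using W0 by (cases p) auto
  obtain x v where wx: "w = x # v" using W0 by (cases w) auto
  have iw: "insert_unit p w = x # insert_unit q v" using pq wx by simp
  have higher: "m_circ_higher (unit_homotopy p g) w b = m_circ_higher g (insert_unit p w) b" by (rule m_circ_higher_homotopy[OF F W pw])
  have last_terms: "(\<Sum>c\<in>letters. unit_homotopy p g (butlast w) c * m [c, last w] b)
      = (\<Sum>c\<in>letters. g (butlast (insert_unit p w)) c * m [c, last (insert_unit p w)] b)"
    by (rule m_circ_last_homotopy[OF F W pw])
  have z2: "g (insert_unit q v) c = 0" for c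
    using F take_Suc_insert_unit[of q v] unfolding units_killed_def pq by blast
  have "circ d m (unit_homotopy p g) (k + 1) w b - circ d m g k (insert_unit p w) b
      = ksign ((k + 1) * ldeg d x) * (\<Sum>c\<in>letters. unit_homotopy p g v c * m [x, c] b)
       + ((\<Sum>c\<in>letters. unit_homotopy p g (butlast w) c * m [c, last w] b)
       - (\<Sum>c\<in>letters. g (butlast (insert_unit p w)) c * m [c, last (insert_unit p w)] b))
       + (m_circ_higher (unit_homotopy p g) w b - m_circ_higher g (insert_unit p w) b)"
    unfolding m_circ_split m_circ_binary_Cons[OF insert_unit_ne] using wx iw z2
    by (simp add: m_circ_binary_Cons algebra_simps del: insert_unit_Suc_Cons)
  also have "\<dots> = ksign ((k + 1) * ldeg d x) * (\<Sum>c\<in>letters. unit_homotopy p g v c * m [x, c] b)"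
    using higher last_terms by simp
  also have "\<dots> = (if hd w = One then ksign (k + 1) * unit_homotopy p g (tl w) b else 0)"
  proof (cases x)
    case One
    then show ?thesis using wx by (simp add: sum_m_unit_left)
  next
    case Y
    have "One \<in> set (take q v)" using W0 wx Y pq by simp
    then have "One \<in> set (take p v)" unfolding pq by (meson in_set_takeD set_take_subset_set_take le_SucI order.refl subsetD)
    then have "unit_homotopy p g v c = 0" for c using units_killed_unit_homotopy[OF F] unfolding units_killed_def by blast
    then show ?thesis using wx Y by simp
  qed
  finally show ?thesis .
qed

lemma hdiff_homotopy_first_unit:
  assumes F: "units_killed g p"
  shows "hdiff d m (k + 1) (unit_homotopy p g) (replicate p Y @ One # z) b + unit_homotopy p (hdiff d m k g) (replicate p Y @ One # z) b
     = - g (replicate p Y @ One # z) b"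
proof -
  have "hdiff d m (k + 1) (unit_homotopy p g) (replicate p Y @ One # z) b + unit_homotopy p (hdiff d m k g) (replicate p Y @ One # z) b
    = (if p = 0 then 1 else -1) * g (replicate p Y @ One # z) b + ksign k * (if p = 0 then - 2 * ksign k * g (replicate p Y @ One # z) b else 0)"
    unfolding hdiff_homotopy_eq[of p "replicate p Y @ One # z", simplified] insert_unit_replicate circ_m_homotopy_first_unit[OF F] m_circ_homotopy_first_unit[OF F] ..
  then show ?thesis by (cases p) (simp_all add: algebra_simps)
qed

lemma hdiff_homotopy_early_unit:
  assumes F: "units_killed g p" and W0: "One \<in> set (take p w)"
  shows "hdiff d m (k + 1) (unit_homotopy p g) w b + unit_homotopy p (hdiff d m k g) w b = 0"
proof (cases "p \<le> length w")
  case True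
  have "hdiff d m (k + 1) (unit_homotopy p g) w b + unit_homotopy p (hdiff d m k g) w b
     = (if hd w = One then unit_homotopy p g (tl w) b else 0) + ksign k * (if hd w = One then ksign (k + 1) * unit_homotopy p g (tl w) b else 0)"
    unfolding hdiff_homotopy_eq[OF True] circ_m_homotopy_early_unit[OF F W0 True] m_circ_homotopy_early_unit[OF F W0 True] ..
  moreover have "ksign (k + 1) = - (ksign k :: 'r)" by (rule ksign_Suc)
  ultimately show ?thesis by simp
next
  case False
  have "hdiff d m (k + 1) (unit_homotopy p g) w b = hdiff d m (k + 1) (\<lambda>v c. 0) w b"
    by (rule hdiff_local) (use False in \<open>auto simp: unit_homotopy_def\<close>)
  also have "\<dots> = 0" by (rule hdiff_zero) simp
  finally show ?thesis using False by (simp add: unit_homotopy_def)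
qed

section \<open>The differential on normalized cochains\<close>

lemma circ_normalized_m:
  assumes "normalized G"
  shows "circ d G m (-1) (replicate a Y @ One # z) b
    = (if a \<ge> 1 then - G (replicate a Y @ z) b else 0) + (if z \<noteq> [] then G (replicate a Y @ z) b else 0)"
  using assms
proof (induction a arbitrary: G)
  case 0
  have z1: "(\<lambda>v b. G (One # v) b) = (\<lambda>v b. 0)" using normalized_One[OF 0] by (intro ext) simp
  show ?case unfolding append.simps replicate_0 circ_m_Cons sum_m_unit_Cons z1 by (simp add: circ_outer_zero)
next
  case (Suc a)
  have z: "G (One # r) b = 0" for r using normalized_One[OF Suc.prems] .
  show ?case
    unfolding replicate_Suc append_Cons circ_m_Cons[of G Y] sum_m_Y_Cons[where G = G, OF z] ksign_ldegY[of 1, simplified]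
      Suc.IH[OF normalized_Y[OF Suc.prems]]
    by (cases a) auto
qed

lemma circ_normalized_m_Yword:
  assumes "normalized G"
  shows "circ d G m (-1) (replicate n Y) b = 0"
  using assms
proof (induction n arbitrary: G)
  case 0
  show ?case unfolding circ_decomp3 by (simp add: decomp3_Nil)
next
  case (Suc n)
  have z: "G (One # r) b = 0" for r using normalized_One[OF Suc.prems] .
  show ?case
    unfolding replicate_Suc circ_m_Cons[of G Y] sum_m_Y_Cons[where G = G, OF z] ksign_ldegY[of 1, simplified]
      Suc.IH[OF normalized_Y[OF Suc.prems]]
    by (cases n) auto
qed

lemma m_circ_higher_normalized: "normalized G \<Longrightarrow> One \<in> set W \<Longrightarrow> m_circ_higher G W b = 0"
  unfolding m_circ_higher_def normalized_def by (auto intro!: sum.neutral)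

lemma hom_Yword_unit: "hom Rg d k x \<Longrightarrow> even k \<Longrightarrow> x (replicate j Y) One = 0"
  by (rule hom_odd) (use d_even in \<open>auto simp: wdeg_replicate\<close>)

lemma hom_Yword_Y: "hom Rg d k x \<Longrightarrow> odd k \<Longrightarrow> x (replicate j Y) Y = 0"
  by (rule hom_odd) (use d_even in \<open>auto simp: wdeg_replicate\<close>)

lemma hom_sign_Yword_unit: "hom Rg d k x \<Longrightarrow> ksign k * x (replicate j Y) One = - x (replicate j Y) One"
  by (cases "even k") (auto simp: ksign_even ksign_odd hom_Yword_unit)

lemma hom_sign_Yword_Y: "hom Rg d k x \<Longrightarrow> ksign k * x (replicate j Y) Y = x (replicate j Y) Y"
  by (cases "even k") (auto simp: ksign_even ksign_odd hom_Yword_Y)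

lemma hom_Yword_unit_right:
  assumes "hom Rg d k x"
  shows "x (replicate a Y) b + ksign k * (\<Sum>c\<in>letters. x (replicate a Y) c * m [c, One] b) = 0"
  using hom_sign_Yword_unit[OF assms, of a] hom_sign_Yword_Y[OF assms, of a]
  by (cases b) (auto simp: m_unit_unit m_Y_unit algebra_simps)

lemma hdiff_normalized_unit_word:
  assumes N: "normalized x" and H: "hom Rg d k x" and w: "One \<in> set w"
  shows "hdiff d m k x w b = 0"
proof -
  obtain a z where wz: "w = replicate a Y @ One # z" using unit_decomp[OF w] by blast
  then have ne: "w \<noteq> []" by simp
  have Mc: "circ d m x k w b = ksign (k * ldeg d (hd w)) * (\<Sum>c\<in>letters. x (tl w) c * m [hd w, c] b)
       + (\<Sum>c\<in>letters. x (butlast w) c * m [c, last w] b)"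
    unfolding m_circ_split m_circ_higher_normalized[OF N w] m_circ_binary_Cons[OF ne] by simp
  have xz: "One \<in> set v \<Longrightarrow> x v c = 0" for v c using N unfolding normalized_def by blast
  have last_term: "(\<Sum>c\<in>letters. x (butlast w) c * m [c, last w] b)
      = (if z = [] then \<Sum>c\<in>letters. x (replicate a Y) c * m [c, One] b else 0)"
    using wz xz[of "butlast w"] by (cases z) (simp_all add: butlast_append)
  show ?thesis
  proof (cases a)
    case 0
    then show ?thesis
      unfolding hdiff_eq Mc last_term using wz circ_normalized_m[OF N, of 0 z b] hom_Yword_unit_right[OF H, of 0 b]
      by (simp add: sum_m_unit_left algebra_simps)
  next
    case (Suc a')
    have "x (tl w) c = 0" for c using xz wz Suc by simp
    then show ?thesis
      unfolding hdiff_eq Mc last_term using wz Suc circ_normalized_m[OF N, of a z b] hom_Yword_unit_right[OF H, of a b]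
      by (cases "z = []") (simp_all add: algebra_simps neg_eq_iff_add_eq_0)
  qed
qed

lemma m_circ_Yword:
  "circ d m G k (replicate N Y) b = (if b = One then (\<Sum>s\<le>N. of_nat (s + 1) * u_coeff (s + 1) * G (replicate (N - s) Y) Y) else 0)"
proof -
  let ?W = "replicate N Y"
  have Yw: "(P, Q, R) \<in> decomp3 ?W \<Longrightarrow> One \<notin> set P \<and> One \<notin> set Q \<and> One \<notin> set R" for P Q R
    by (metis Un_iff in_set_replicate letter.distinct(1) set_append mem_decomp3)
  have "circ d m G k ?W b = (\<Sum>(P, Q, R)\<in>decomp3 ?W. G Q Y * m (P @ [Y] @ R) b)
     + (\<Sum>(P, Q, R)\<in>decomp3 ?W. G Q One * m (P @ [One] @ R) b)"
    unfolding circ_decomp3 sum.distrib[symmetric]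
    by (rule sum.cong[OF refl], clarify) (use Yw ksign_Yword in \<open>simp add: algebra_simps\<close>)
  also have "(\<Sum>(P, Q, R)\<in>decomp3 ?W. G Q One * m (P @ [One] @ R) b)
     = (\<Sum>(P, Q, R)\<in>decomp3 ?W. if length P + length R = 1 then G Q One * m (P @ [One] @ R) b else 0)"
    by (rule sum.cong[OF refl], clarify) (simp add: m_unit_arg)
  also have "\<dots> = 0"
    unfolding sum_decomp3_outer_length_1
  proof (cases N)
    case (Suc n)
    then show "(if ?W = [] then 0 else G (tl ?W) One * m ([hd ?W] @ [One] @ []) b
        + G (butlast ?W) One * m ([] @ [One] @ [last ?W]) b) = 0"
      by (cases b) (simp_all add: m_Y_unit m_unit_left butlast_Cons_replicate Cons_butlast_replicate)
  qed simp
  also have "(\<Sum>(P, Q, R)\<in>decomp3 ?W. G Q Y * m (P @ [Y] @ R) b)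
     = (if b = One then (\<Sum>(P, Q, R)\<in>decomp3 ?W. G (replicate (N - (length P + length R)) Y) Y * u_coeff (length P + length R + 1)) else 0)"
  proof (cases "b = One")
    case True
    have pt: "G Q Y * m (P @ [Y] @ R) b = G (replicate (N - (length P + length R)) Y) Y * u_coeff (length P + length R + 1)"
      if pqr: "(P, Q, R) \<in> decomp3 ?W" for P Q R
    proof -
      have y: "One \<notin> set P" "One \<notin> set Q" "One \<notin> set R" using Yw pqr by auto
      have "Q = replicate (length Q) Y" using Yword_eq y by blast
      moreover have "length Q = N - (length P + length R)" using pqr
        by (metis mem_decomp3 add_diff_cancel_left' add.commute length_append length_replicate add.assoc)
      moreover have "m (P @ [Y] @ R) b = u_coeff (length P + length R + 1)" using m_Yword[of "P @ [Y] @ R" b] y True by simp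
      ultimately show ?thesis by simp
    qed
    have "(\<Sum>(P, Q, R)\<in>decomp3 ?W. G Q Y * m (P @ [Y] @ R) b)
       = (\<Sum>(P, Q, R)\<in>decomp3 ?W. G (replicate (N - (length P + length R)) Y) Y * u_coeff (length P + length R + 1))"
      by (rule sum.cong[OF refl], clarify, rule pt)
    then show ?thesis using True by simp
  next
    case False
    then have "b = Y" by (cases b) auto
    then show ?thesis using Yw m_Yword_Y by (auto intro!: sum.neutral)
  qed
  also have "(\<Sum>(P, Q, R)\<in>decomp3 ?W. G (replicate (N - (length P + length R)) Y) Y * u_coeff (length P + length R + 1))
      = (\<Sum>s\<le>N. of_nat (s + 1) * (G (replicate (N - s) Y) Y * u_coeff (s + 1)))"
    by (rule sum_decomp3_replicate)
  finally show ?thesis by (simp add: algebra_simps)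
qed

lemma hdiff_normalized_Yword:
  assumes N: "normalized x"
  shows "hdiff d m k x (replicate n Y) b
    = (if b = One then - ksign k * (\<Sum>s\<le>n. of_nat (s + 1) * u_coeff (s + 1) * x (replicate (n - s) Y) Y) else 0)"
  unfolding hdiff_eq circ_normalized_m_Yword[OF N] m_circ_Yword by simp

lemma fps_deriv_char_series_nth: "fps_nth (fps_deriv (char_series m)) i = of_nat (i + 1) * u_coeff (i + 1)"
  unfolding char_series_def u_coeff_def by (simp add: fps_deriv_def)

lemma fps_deriv_char_series_mult_nth:
  "fps_nth (fps_deriv (char_series m) * Abs_fps Gf) n = (\<Sum>s\<le>n. of_nat (s + 1) * u_coeff (s + 1) * Gf (n - s))"
  unfolding fps_mult_nth fps_deriv_char_series_nth atLeast0AtMost by simp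

section \<open>Normalization of cochains\<close>

primrec normalization_seq :: "int \<Rightarrow> 'r cod \<Rightarrow> nat \<Rightarrow> 'r cod" where
  "normalization_seq k f 0 = f"
| "normalization_seq k f (Suc p)
    = (\<lambda>w b. normalization_seq k f p w b + hdiff d m (k + 1) (unit_homotopy p (normalization_seq k f p)) w b)"

definition partial_homotopy :: "int \<Rightarrow> 'r cod \<Rightarrow> nat \<Rightarrow> 'r cod" where
  "partial_homotopy k f M = (\<lambda>v b. \<Sum>p<M. unit_homotopy p (normalization_seq k f p) v b)"

definition normalization_homotopy :: "int \<Rightarrow> 'r cod \<Rightarrow> 'r cod" where
  "normalization_homotopy k f = (\<lambda>v b. \<Sum>p<Suc (length v). unit_homotopy p (normalization_seq k f p) v b)"

text \<open>On a word w the corrections by s_p with p > |w| vanish, so the sequence is stationary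
  on w from p = |w| + 1 on.\<close>

definition normalize :: "int \<Rightarrow> 'r cod \<Rightarrow> 'r cod" where
  "normalize k f = (\<lambda>w b. normalization_seq k f (Suc (length w)) w b)"

lemma hom_normalization_seq: "hom Rg d k f \<Longrightarrow> hom Rg d k (normalization_seq k f p)"
proof (induction p)
  case (Suc p)
  have "hom Rg d (k + 1 - 1) (hdiff d m (k + 1) (unit_homotopy p (normalization_seq k f p)))"
    by (rule hdiff_hom[OF hom_unit_homotopy[OF Suc.IH[OF Suc.prems]]])
  then show ?case using Suc by (simp add: hom_add)
qed simp

lemma normalization_seq_kills_units:
  assumes H: "hom Rg d k f" and N: "normalized (hdiff d m k f)"
  shows "units_killed (normalization_seq k f p) p \<and> normalized (hdiff d m k (normalization_seq k f p))"
proof (induction p)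
  case 0
  show ?case using N by (simp add: units_killed_def)
next
  case (Suc p)
  let ?g = "normalization_seq k f p"
  have Hg: "hom Rg d k ?g" using hom_normalization_seq[OF H] .
  have Fg: "units_killed ?g p" and Ng: "normalized (hdiff d m k ?g)" using Suc by auto
  have sq: "hdiff d m k (hdiff d m (k + 1) (unit_homotopy p ?g)) w b = 0" for w b
    by (rule hdiff_hdiff[OF hom_unit_homotopy[OF Hg]])
  have N': "normalized (hdiff d m k (normalization_seq k f (Suc p)))"
    using Ng unfolding normalized_def by (simp add: hdiff_add sq)
  have sz: "unit_homotopy p (hdiff d m k ?g) q c = 0" for q c
    using Ng unfolding normalized_def unit_homotopy_def by simp
  have F': "units_killed (normalization_seq k f (Suc p)) (Suc p)"
    unfolding units_killed_def
  proof (intro allI impI)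
    fix q c assume q: "One \<in> set (take (Suc p) q)"
    show "normalization_seq k f (Suc p) q c = 0"
    proof (cases "One \<in> set (take p q)")
      case True
      have "?g q c = 0" using Fg True unfolding units_killed_def by blast
      moreover have "hdiff d m (k + 1) (unit_homotopy p ?g) q c = 0" using hdiff_homotopy_early_unit[OF Fg True, of k c] sz by simp
      ultimately show ?thesis by simp
    next
      case False
      then obtain z where qz: "q = replicate p Y @ One # z" using first_unit_at q by blast
      show ?thesis using hdiff_homotopy_first_unit[OF Fg, of k z c] sz qz by simp
    qed
  qed
  show ?case using N' F' by simp
qed

lemma normalization_seq_eq: "normalization_seq k f M w b = f w b + hdiff d m (k + 1) (partial_homotopy k f M) w b"
proof (induction M arbitrary: w b)
  case 0
  show ?case unfolding partial_homotopy_def by (simp add: hdiff_zero)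
next
  case (Suc M)
  have "partial_homotopy k f (Suc M) = (\<lambda>v b. partial_homotopy k f M v b + unit_homotopy M (normalization_seq k f M) v b)"
    unfolding partial_homotopy_def by (intro ext) simp
  then show ?case using Suc by (simp add: hdiff_add)
qed

lemma normalize_eq: "normalize k f w b = f w b + hdiff d m (k + 1) (normalization_homotopy k f) w b"
proof -
  have "hdiff d m (k + 1) (partial_homotopy k f (Suc (length w))) w b = hdiff d m (k + 1) (normalization_homotopy k f) w b"
  proof (rule hdiff_local)
    fix v :: "letter list" and c :: letter assume lv: "length v \<le> length w"
    show "partial_homotopy k f (Suc (length w)) v c = normalization_homotopy k f v c"
      unfolding partial_homotopy_def normalization_homotopy_def
      by (rule sum.mono_neutral_right) (use lv in \<open>auto simp: unit_homotopy_def\<close>)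
  qed
  then show ?thesis unfolding normalize_def normalization_seq_eq by simp
qed

lemma normalized_normalize:
  assumes "hom Rg d k f" "normalized (hdiff d m k f)"
  shows "normalized (normalize k f)"
  unfolding normalized_def
proof (intro allI impI)
  fix q c assume q: "One \<in> set q"
  have "units_killed (normalization_seq k f (Suc (length q))) (Suc (length q))" using normalization_seq_kills_units[OF assms] by blast
  moreover have "take (Suc (length q)) q = q" by simp
  ultimately show "normalize k f q c = 0" using q unfolding units_killed_def normalize_def by metis
qed

lemma hom_normalization_homotopy:
  assumes "hom Rg d k f" shows "hom Rg d (k + 1) (normalization_homotopy k f)"
  unfolding hom_def
proof (intro allI)
  fix v b
  have "unit_homotopy p (normalization_seq k f p) v b \<in> Rg (k + 1 + wdeg d v - ldeg d b)" for p
    using hom_unit_homotopy[OF hom_normalization_seq[OF assms]] unfolding hom_def by blast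
  then show "normalization_homotopy k f v b \<in> Rg (k + 1 + wdeg d v - ldeg d b)"
    unfolding normalization_homotopy_def by (intro Rg_sum) auto
qed

lemma hom_normalize: "hom Rg d k f \<Longrightarrow> hom Rg d k (normalize k f)"
  unfolding hom_def normalize_def using hom_normalization_seq unfolding hom_def by blast

lemma normalization_seq_add: "normalization_seq k (\<lambda>w b. f w b + g w b) p
    = (\<lambda>w b. normalization_seq k f p w b + normalization_seq k g p w b)"
proof (induction p)
  case (Suc p)
  have "unit_homotopy p (\<lambda>w b. normalization_seq k f p w b + normalization_seq k g p w b)
      = (\<lambda>w b. unit_homotopy p (normalization_seq k f p) w b + unit_homotopy p (normalization_seq k g p) w b)"
    unfolding unit_homotopy_def by (intro ext) simp
  then show ?case using Suc by (intro ext) (simp add: hdiff_add)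
qed simp

lemma normalization_seq_smult: "normalization_seq k (\<lambda>w b. r * f w b) p = (\<lambda>w b. r * normalization_seq k f p w b)"
proof (induction p)
  case (Suc p)
  have "unit_homotopy p (\<lambda>w b. r * normalization_seq k f p w b) = (\<lambda>w b. r * unit_homotopy p (normalization_seq k f p) w b)"
    unfolding unit_homotopy_def by (intro ext) simp
  then show ?case using Suc by (intro ext) (simp add: hdiff_smult algebra_simps)
qed simp

lemma normalization_seq_shift: "even j \<Longrightarrow> normalization_seq (j + k) f p = normalization_seq k f p"
proof (induction p)
  case (Suc p)
  have "hdiff d m (j + k + 1) G = hdiff d m (k + 1) G" for G using hdiff_shift[OF Suc.prems, of d m "k + 1"]
    by (simp add: add.assoc)
  then show ?case using Suc by simp
qed simp

lemma normalization_seq_normalized: "normalized f \<Longrightarrow> normalization_seq k f p = f"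
proof (induction p)
  case (Suc p)
  have "unit_homotopy p f v c = 0" for v c using Suc.prems unfolding normalized_def unit_homotopy_def by simp
  then show ?case using Suc by (intro ext) (simp add: hdiff_zero)
qed simp

lemma normalize_add: "normalize k (\<lambda>w b. f w b + g w b) w b = normalize k f w b + normalize k g w b"
  unfolding normalize_def normalization_seq_add by simp

lemma normalize_smult: "normalize k (\<lambda>w b. r * f w b) w b = r * normalize k f w b"
  unfolding normalize_def normalization_seq_smult by simp

lemma normalize_shift: "even j \<Longrightarrow> normalize (j + k) f = normalize k f"
  unfolding normalize_def normalization_seq_shift by simp

lemma normalize_normalized: "normalized f \<Longrightarrow> normalize k f = f"
  unfolding normalize_def normalization_seq_normalized by simp

lemma hdiff_normalize:
  assumes "hom Rg d k f"
  shows "hdiff d m k (normalize k f) = hdiff d m k f"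
proof (intro ext)
  fix w b
  have "normalize k f = (\<lambda>w b. f w b + hdiff d m (k + 1) (normalization_homotopy k f) w b)"
    by (intro ext) (rule normalize_eq)
  then show "hdiff d m k (normalize k f) w b = hdiff d m k f w b"
    by (simp add: hdiff_add hdiff_hdiff[OF hom_normalization_homotopy[OF assms]])
qed

lemma hom_series_cochain: "p \<in> gfps Rg d (k - ldeg d b) \<Longrightarrow> hom Rg d k (series_cochain b p)"
  unfolding hom_def gfps_def series_cochain_def by (auto simp: wdeg_Yword algebra_simps intro: Rg_zero)

lemma gfps_component_series:
  assumes "hom Rg d k x"
  shows "component_series x b \<in> gfps Rg d (k - ldeg d b)"
  unfolding gfps_def component_series_def
proof (intro CollectI allI)
  fix i
  have "x (replicate i Y) b \<in> Rg (k + wdeg d (replicate i Y) - ldeg d b)"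
    using assms unfolding hom_def by blast
  then show "fps_nth (Abs_fps (\<lambda>n. x (replicate n Y) b)) i \<in> Rg (k - ldeg d b + int i * (d + 2))"
    by (simp add: wdeg_replicate algebra_simps)
qed

lemma gfps_ksign: "p \<in> gfps Rg d k \<Longrightarrow> fps_const (ksign j) * p \<in> gfps Rg d k"
  unfolding gfps_def by (simp add: Rg_ksign)

lemma zero_in_gideal: "0 \<in> gideal Rg d q e k"
  unfolding gideal_def gfps_def by (auto intro!: exI[of _ 0] Rg_zero)

lemma hdiff_normalized:
  assumes "hom Rg d k x" and "normalized x"
  shows "hdiff d m k x = series_cochain One
    (fps_const (- ksign k) * (fps_deriv (char_series m) * component_series x Y))"
proof (intro ext)
  fix w b
  show "hdiff d m k x w b = series_cochain One
      (fps_const (- ksign k) * (fps_deriv (char_series m) * component_series x Y)) w b"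
  proof (cases "One \<in> set w")
    case True
    then show ?thesis using hdiff_normalized_unit_word[OF assms(2,1)] by (simp add: series_cochain_def)
  next
    case False
    then obtain n where w: "w = replicate n Y" by (metis Yword_eq)
    have "fps_nth (fps_const (- ksign k) * (fps_deriv (char_series m) * Abs_fps (\<lambda>l. x (replicate l Y) Y))) n
        = - ksign k * (\<Sum>s\<le>n. of_nat (s + 1) * u_coeff (s + 1) * x (replicate (n - s) Y) Y)"
      by (simp add: fps_deriv_char_series_mult_nth)
    then show ?thesis
      unfolding w hdiff_normalized_Yword[OF assms(2)] series_cochain_def component_series_def by simp
  qed
qed

definition normal_series :: "int \<Rightarrow> 'r cod \<Rightarrow> 'r fps" where
  "normal_series k f = component_series (normalize k f) One"

lemma normal_series_gfps: "hom Rg d k f \<Longrightarrow> normal_series k f \<in> gfps Rg d (k - 1)"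
  unfolding normal_series_def using gfps_component_series[OF hom_normalize, of k f One] by simp

lemma normal_series_add: "normal_series k (\<lambda>w b. f w b + g w b) = normal_series k f + normal_series k g"
  unfolding normal_series_def component_series_def by (simp add: fps_eq_iff normalize_add)

lemma normal_series_smult:
  assumes "r \<in> Rg j"
  shows "normal_series (j + k) (\<lambda>w b. r * f w b) = fps_const r * normal_series k f"
proof (cases "even j")
  case True
  then show ?thesis
    unfolding normal_series_def component_series_def normalize_shift[OF True]
    by (simp add: fps_eq_iff normalize_smult)
next
  case False
  then have "r = 0" using Rg_odd assms by blast
  moreover have "normalize (j + k) (\<lambda>w b. 0) = (\<lambda>w b. 0)"
    by (rule normalize_normalized) (simp add: normalized_def)
  ultimately show ?thesis
    unfolding normal_series_def component_series_def by (simp add: fps_eq_iff)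
qed

lemma series_cochain_cocycle:
  assumes "p \<in> gfps Rg d (k - 1)"
  shows "series_cochain One p \<in> cocycles Rg d m k" and "normal_series k (series_cochain One p) = p"
proof -
  have hom: "hom Rg d k (series_cochain One p)" using hom_series_cochain assms by simp
  then show "series_cochain One p \<in> cocycles Rg d m k"
    unfolding cocycles_def
    by (simp add: hdiff_normalized normalized_series_cochain component_series_series_cochain)
  show "normal_series k (series_cochain One p) = p"
    unfolding normal_series_def normalize_normalized[OF normalized_series_cochain]
    by (simp add: component_series_series_cochain)
qed

lemma normalize_cocycle:
  assumes nonzd: "\<forall>r. r * m [Y] One = 0 \<longrightarrow> r = 0" and f: "f \<in> cocycles Rg d m k"
  shows "normalize k f = series_cochain One (normal_series k f)"
proof -
  let ?x = "normalize k f"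
  have hom: "hom Rg d k f" and cocycle: "hdiff d m k f = (\<lambda>w b. 0)"
    using f unfolding cocycles_def by auto
  have normalized: "normalized ?x"
    using normalized_normalize[OF hom] cocycle by (simp add: normalized_def)
  have "series_cochain One (fps_const (- ksign k) * (fps_deriv (char_series m) * component_series ?x Y))
      = (\<lambda>w b. 0)"
    using hdiff_normalized[OF hom_normalize[OF hom] normalized] hdiff_normalize[OF hom] cocycle by simp
  from arg_cong[where f = "\<lambda>x. component_series x One", OF this]
  have "fps_deriv (char_series m) * component_series ?x Y = 0"
    by (simp add: component_series_series_cochain flip: fps_const_neg)
  then have "component_series ?x Y = 0"
    by (rule fps_mult_eq_0_imp_right[rotated]) (simp add: nonzd char_series_def)
  then show ?thesis
    unfolding normal_series_def by (rule normalized_eq_series_cochain[OF normalized])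
qed

lemma coboundary_if_normal_series_in_gideal:
  assumes nonzd: "\<forall>r. r * m [Y] One = 0 \<longrightarrow> r = 0" and f: "f \<in> cocycles Rg d m k"
    and "normal_series k f \<in> gideal Rg d (fps_deriv (char_series m)) d (k - 1)"
  shows "f \<in> coboundaries Rg d m k"
proof -
  have hom: "hom Rg d k f" using f unfolding cocycles_def by simp
  obtain c where c: "c \<in> gfps Rg d (k - 1 - d)" and fc: "normal_series k f = fps_deriv (char_series m) * c"
    using assms(3) unfolding gideal_def by auto
  define y where "y = series_cochain Y (fps_const (ksign k) * c)"
  have hom_y: "hom Rg d (k + 1) y"
    unfolding y_def by (rule hom_series_cochain) (use gfps_ksign[OF c] in \<open>simp add: algebra_simps\<close>)
  have normalized_y: "normalized y" unfolding y_def by (rule normalized_series_cochain)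
  have cy: "component_series y Y = fps_const (ksign k) * c"
    unfolding y_def component_series_series_cochain by simp
  have "fps_const (- ksign (k + 1)) * (fps_deriv (char_series m) * component_series y Y)
      = fps_deriv (char_series m) * c"
    unfolding uminus_ksign_Suc cy
    by (subst mult.left_commute[of "fps_deriv (char_series m)"]) (simp add: mult.assoc[symmetric])
  then have "hdiff d m (k + 1) y = normalize k f"
    unfolding normalize_cocycle[OF nonzd f] fc hdiff_normalized[OF hom_y normalized_y]
    by simp
  then have "f = hdiff d m (k + 1) (\<lambda>w b. y w b - normalization_homotopy k f w b)"
    by (intro ext) (simp add: hdiff_diff normalize_eq)
  moreover have "hom Rg d (k + 1) (\<lambda>w b. y w b - normalization_homotopy k f w b)"
    by (rule hom_diff[OF hom_y hom_normalization_homotopy[OF hom]])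
  ultimately show ?thesis unfolding coboundaries_def by blast
qed

lemma normal_series_in_gideal_if_coboundary:
  assumes f: "hom Rg d k f" and "f \<in> coboundaries Rg d m k"
  shows "normal_series k f \<in> gideal Rg d (fps_deriv (char_series m)) d (k - 1)"
proof -
  obtain g where hom_g: "hom Rg d (k + 1) g" and fg: "f = hdiff d m (k + 1) g"
    using assms(2) unfolding coboundaries_def by blast
  define x where "x = (\<lambda>w b. g w b + normalization_homotopy k f w b)"
  have hom_x: "hom Rg d (k + 1) x"
    unfolding x_def by (rule hom_add[OF hom_g hom_normalization_homotopy[OF f]])
  have dx: "hdiff d m (k + 1) x = normalize k f"
    unfolding x_def by (intro ext) (simp add: hdiff_add normalize_eq fg)
  define y where "y = normalize (k + 1) x"
  have hom_y: "hom Rg d (k + 1) y" unfolding y_def by (rule hom_normalize[OF hom_x])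
  have dy: "hdiff d m (k + 1) y = normalize k f" unfolding y_def hdiff_normalize[OF hom_x] by (rule dx)
  have "hdiff d m k f = (\<lambda>w b. 0)" unfolding fg by (intro ext) (rule hdiff_hdiff[OF hom_g])
  then have "normalized (hdiff d m (k + 1) x)"
    unfolding dx by (intro normalized_normalize[OF f]) (simp add: normalized_def)
  then have normalized_y: "normalized y" unfolding y_def by (rule normalized_normalize[OF hom_x])
  have "normal_series k f = fps_const (- ksign (k + 1)) * (fps_deriv (char_series m) * component_series y Y)"
    unfolding normal_series_def dy[symmetric] hdiff_normalized[OF hom_y normalized_y]
    by (simp add: component_series_series_cochain)
  also have "\<dots> = fps_deriv (char_series m) * (fps_const (ksign k) * component_series y Y)"
    unfolding uminus_ksign_Suc by (rule mult.left_commute)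
  finally have "normal_series k f = fps_deriv (char_series m) * (fps_const (ksign k) * component_series y Y)" .
  moreover have "fps_const (ksign k) * component_series y Y \<in> gfps Rg d (k - 1 - d)"
    using gfps_ksign[OF gfps_component_series[OF hom_y, of Y]] by (simp add: algebra_simps)
  ultimately show ?thesis unfolding gideal_def by blast
qed
lemma normal_series_in_gideal_iff_coboundary:
  assumes "\<forall>r. r * m [Y] One = 0 \<longrightarrow> r = 0" and "f \<in> cocycles Rg d m k"
  shows "normal_series k f \<in> gideal Rg d (fps_deriv (char_series m)) d (k - 1) \<longleftrightarrow> f \<in> coboundaries Rg d m k"
  using coboundary_if_normal_series_in_gideal[OF assms] normal_series_in_gideal_if_coboundary assms(2)
  unfolding cocycles_def by auto

end

theorem proposition7p1:
  fixes Rg :: "int \<Rightarrow> 'r::comm_ring_1 set" and d :: int and m :: "'r cod"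
  assumes "evenly_graded_ring Rg"
    and "even_moore_algebra Rg d m"
    and "\<forall>r. r * m [Y] One = 0 \<longrightarrow> r = 0"
  shows "\<exists>(s::int) (\<phi>::int \<Rightarrow> 'r cod \<Rightarrow> 'r fps).
    (\<forall>k. \<forall>f\<in>cocycles Rg d m k. \<phi> k f \<in> gfps Rg d (k + s)) \<and>
    (\<forall>k. \<forall>f\<in>cocycles Rg d m k. \<forall>g\<in>cocycles Rg d m k.
        \<phi> k (\<lambda>w b. f w b + g w b) = \<phi> k f + \<phi> k g) \<and>
    (\<forall>j k r. \<forall>f\<in>cocycles Rg d m k. r \<in> Rg j \<longrightarrow>
        \<phi> (j + k) (\<lambda>w b. r * f w b) = fps_const r * \<phi> k f) \<and>
    (\<forall>k. \<forall>p\<in>gfps Rg d (k + s). \<exists>f\<in>cocycles Rg d m k.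
        \<phi> k f - p \<in> gideal Rg d (fps_deriv (char_series m)) d (k + s)) \<and>
    (\<forall>k. \<forall>f\<in>cocycles Rg d m k.
        \<phi> k f \<in> gideal Rg d (fps_deriv (char_series m)) d (k + s) \<longleftrightarrow>
        f \<in> coboundaries Rg d m k)"
proof -
  interpret even_moore Rg d m using assms(1,2) by unfold_locales
  show ?thesis
  proof (intro exI[of _ "-1"] exI[of _ normal_series] conjI allI ballI impI)
    fix k f assume "f \<in> cocycles Rg d m k"
    then show "normal_series k f \<in> gfps Rg d (k + -1)"
      using normal_series_gfps unfolding cocycles_def by simp
  next
    fix j k r f assume "r \<in> Rg j"
    then show "normal_series (j + k) (\<lambda>w b. r * f w b) = fps_const r * normal_series k f"
      by (rule normal_series_smult)
  next
    fix k p assume "p \<in> gfps Rg d (k + -1)"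
    then show "\<exists>f\<in>cocycles Rg d m k. normal_series k f - p \<in> gideal Rg d (fps_deriv (char_series m)) d (k + -1)"
      using series_cochain_cocycle[of p k] by (intro bexI[of _ "series_cochain One p"]) (simp_all add: zero_in_gideal)
  next
    fix k f assume "f \<in> cocycles Rg d m k"
    then show "normal_series k f \<in> gideal Rg d (fps_deriv (char_series m)) d (k + -1)
        \<longleftrightarrow> f \<in> coboundaries Rg d m k"
      using normal_series_in_gideal_iff_coboundary[OF assms(3)] by simp
  qed (rule normal_series_add)
qed

end
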